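(* Let $N=1$ and $m_1\ge2$, so the problem is the social cost minimization $\min_{\mathbf x_1\in\mathbb R^{m_1}} f_1(\mathbf x_1)=\sum_{j=1}^{m_1}f_{1j}(\mathbf x_1)$, and let $\mathbf x_1^*$ be a (finite) minimizer. Suppose each $f_{1j}$ is $\mathcal C^2$, $(\mathbf x_1-\mathbf y_1)^T(\nabla f_1(\mathbf x_1)-\nabla f_1(\mathbf y_1))>0$ for all distinct $\mathbf x_1,\mathbf y_1\in\mathbb R^{m_1}$, and $\mathcal G_I^1$ and $\mathcal G_{C_k}^1$ for all $k\in\{1,\dots,m_1\}$ are undirected and connected. Consider the dynamics, for $j\in\{1,\dots,m_1\}$ and $k\in\mathcal N_{Ij}^1\cup\{j\}$: $\dot x_{1j}=-d_{1j}g_{1jj}$, $\dot w_{1jk}=-\sum_{l\in\mathcal N_{Ik}^1\cup\{k\}}a_1^{jl}(g_{1jk}-g_{1lk})$, $g_{1jk}=w_{1jk}+\partial f_{1j}(\mathbf x_1)/\partial x_{1k}$, with $d_{1j}=\delta\bar d_{1j}$, $\bar d_{1j}>0$ fixed, $w_{1jk}(0)=0$. Then for each pair of positive constants $(\Delta,v)$ there exists $\delta^*(\Delta,v)>0$ such that for each $\delta\in(0,\delta^* )$, every solution with $\|\chi_1(0)\|<\Delta$ satisfies $$\|\chi_1(t)\|\le\phi(\|\chi_1(0)\|,\delta t)+v\quad\text{for all }t\ge0,$$ where $\phi$ is a class-$\mathcal{KL}$ function.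
   Context: Agent $j\in\{1,\dots,m_1\}$ has action $x_{1j}\in\mathbb R$ and local cost $f_{1j}:\mathbb R^{m_1}\to\mathbb R$; $\mathbf x_1=(x_{11},\dots,x_{1m_1})^T$. Interference graph $\mathcal G_I^1$: the undirected graph on vertex set $\{1,\dots,m_1\}$ in which distinct $j,k$ are adjacent iff $f_{1j}$ depends explicitly on $x_{1k}$ or $f_{1k}$ depends explicitly on $x_{1j}$; $\mathcal N_{Ik}^1$ is the neighbor set of $k$ and $N_{Ik}^1=|\mathcal N_{Ik}^1|$. In particular $\partial f_{1j}/\partial x_{1k}\equiv0$ whenever $j\notin\mathcal N_{Ik}^1\cup\{k\}$. Communication graph $\mathcal G_C^1$: an undirected weighted graph on $\{1,\dots,m_1\}$ with adjacency matrix $(a_1^{jl})$, $a_1^{jl}=a_1^{lj}\ge0$, $a_1^{jj}=0$. The interference-to-$k$ communication graph $\mathcal G_{C_k}^1$ is the subgraph of $\mathcal G_C^1$ induced on the vertex set $\mathcal N_{Ik}^1\cup\{k\}$ (with inherited weights); its number of vertices is $N_{C_k^1}=N_{Ik}^1+1$. Error coordinates: $G_{1k}$ is the vector of $g_{1jk}$ over $j\in\mathcal N_{Ik}^1\cup\{k\}$; $R_{1k}\in\mathbb R^{N_{C_k^1}\times(N_{C_k^1}-1)}$ is any matrix such that $[\mathbf 1_{N_{C_k^1}}/\sqrt{N_{C_k^1}}\ \ R_{1k}]$ is orthogonal ($\mathbf 1_n$ the all-ones vector); $\bar G_{1k}=R_{1k}^TG_{1k}$, $\bar G_1=(\bar G_{11}^T,\dots,\bar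 G_{1m_1}^T)^T$, and $\chi_1(t)=(\bar G_1(t)^T,(\mathbf x_1(t)-\mathbf x_1^* )^T)^T$. *)

theory Defs
  imports "HOL-Analysis.Analysis"
begin

definition pderiv_k :: "(real^'n \<Rightarrow> real) \<Rightarrow> 'n \<Rightarrow> real^'n \<Rightarrow> real" where
  "pderiv_k f k x = frechet_derivative f (at x) (axis k 1)"

definition C1_fun :: "(real^'n \<Rightarrow> real) \<Rightarrow> bool" where
  "C1_fun g \<longleftrightarrow> (\<forall>x. g differentiable (at x)) \<and> (\<forall>k. continuous_on UNIV (pderiv_k g k))"

definition C2_fun :: "(real^'n \<Rightarrow> real) \<Rightarrow> bool" where
  "C2_fun g \<longleftrightarrow> (\<forall>x. g differentiable (at x)) \<and> (\<forall>k. C1_fun (pderiv_k g k))"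

definition depends_on :: "(real^'n \<Rightarrow> real) \<Rightarrow> 'n \<Rightarrow> bool" where
  "depends_on g k \<longleftrightarrow> (\<exists>x t. g x \<noteq> g (\<chi> i. if i = k then t else x $ i))"

definition NI :: "('n \<Rightarrow> real^'n \<Rightarrow> real) \<Rightarrow> 'n \<Rightarrow> 'n set" where
  "NI f k = {j. j \<noteq> k \<and> (depends_on (f j) k \<or> depends_on (f k) j)}"

text \<open>Vertex set of the interference-to-k communication graph.\<close>
definition VC :: "('n \<Rightarrow> real^'n \<Rightarrow> real) \<Rightarrow> 'n \<Rightarrow> 'n set" where
  "VC f k = NI f k \<union> {k}"

definition interference_connected :: "('n \<Rightarrow> real^'n \<Rightarrow> real) \<Rightarrow> bool" where
  "interference_connected f \<longleftrightarrow>
     (\<forall>j k. (j, k) \<in> {(p, q). q \<in> NI f p}\<^sup>*)"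

definition induced_connected :: "('n \<Rightarrow> 'n \<Rightarrow> real) \<Rightarrow> 'n set \<Rightarrow> bool" where
  "induced_connected a V \<longleftrightarrow>
     (\<forall>j\<in>V. \<forall>l\<in>V. (j, l) \<in> {(p, q). p \<in> V \<and> q \<in> V \<and> a p q > 0}\<^sup>*)"

definition class_K :: "(real \<Rightarrow> real) \<Rightarrow> bool" where
  "class_K \<alpha> \<longleftrightarrow> continuous_on {0..} \<alpha> \<and> \<alpha> 0 = 0 \<and> strict_mono_on {0..} \<alpha>"

definition class_KL :: "(real \<Rightarrow> real \<Rightarrow> real) \<Rightarrow> bool" where
  "class_KL \<beta> \<longleftrightarrow> continuous_on ({0..} \<times> {0..}) (\<lambda>(r, s). \<beta> r s)
     \<and> (\<forall>s\<ge>0. class_K (\<lambda>r. \<beta> r s))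
     \<and> (\<forall>r\<ge>0. antimono_on {0..} (\<beta> r) \<and> ((\<beta> r) \<longlongrightarrow> 0) at_top)"

text \<open>Admissible R_k: columns R k i (i < N_k - 1), supported on VC f k, such that
  [1/sqrt N_k, R_k] is orthogonal (orthonormal columns of a square matrix).\<close>
definition admissible_R :: "('n \<Rightarrow> real^'n \<Rightarrow> real) \<Rightarrow> ('n \<Rightarrow> nat \<Rightarrow> 'n \<Rightarrow> real) \<Rightarrow> bool" where
  "admissible_R f R \<longleftrightarrow> (\<forall>k.
      (\<forall>i < card (VC f k) - 1. \<forall>i' < card (VC f k) - 1.
         (\<Sum>j\<in>VC f k. R k i j * R k i' j) = (if i = i' then 1 else 0))
    \<and> (\<forall>i < card (VC f k) - 1. (\<Sum>j\<in>VC f k. R k i j) = 0))"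

text \<open>Norm of chi_1(t) = (Gbar_1(t), x_1(t) - x_1^* ), with Gbar_{1k} = R_k^T G_{1k}.\<close>
definition chi_norm :: "('n \<Rightarrow> real^'n \<Rightarrow> real) \<Rightarrow> ('n \<Rightarrow> nat \<Rightarrow> 'n \<Rightarrow> real)
    \<Rightarrow> ('n \<Rightarrow> 'n \<Rightarrow> real) \<Rightarrow> real^'n \<Rightarrow> real^'n \<Rightarrow> real" where
  "chi_norm f R g x xstar = sqrt
     ((\<Sum>k\<in>UNIV. \<Sum>i<card (VC f k) - 1. (\<Sum>j\<in>VC f k. R k i j * g j k)\<^sup>2)
      + (norm (x - xstar))\<^sup>2)"

end

theory Submission
  imports Defs
begin

text \<open>
  The estimates \<open>g\<^sub>1\<^sub>j\<^sub>k\<close> always average, over the interference-to-\<open>k\<close> graph, to the true partial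
  derivative \<open>\<partial>f\<^sub>1/\<partial>x\<^sub>1\<^sub>k\<close>, because the consensus dynamics preserves \<open>\<Sum>\<^sub>j w\<^sub>1\<^sub>j\<^sub>k = 0\<close>.
  Take as Lyapunov function \<open>W = \<Sum>\<^sub>j (N\<^sub>C\<^sub>j / d\<^sub>1\<^sub>j) (x\<^sub>1\<^sub>j - x\<^sub>1\<^sub>j\<^sup>*)\<^sup>2 + E\<close>, where \<open>E\<close> is the squared deviation of
  the estimates from these averages, i.e. \<open>\<parallel>Gbar\<^sub>1\<parallel>\<^sup>2\<close>. Along solutions
  \<open>W' \<le> -\<delta> (2 \<langle>x\<^sub>1 - x\<^sub>1\<^sup>*, \<nabla>f\<^sub>1(x\<^sub>1)\<rangle> + \<lambda> E / 2) + O(\<delta>\<^sup>2)\<close> on bounded sets, \<open>\<lambda>\<close> being a spectral gap of the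
  connected communication graphs. Strict monotonicity of \<open>\<nabla>f\<^sub>1\<close> makes the bracket positive away from
  \<open>(x\<^sub>1\<^sup>*, 0)\<close>, so by compactness \<open>W\<close> decreases at a uniform rate until it falls below any level \<open>\<mu>\<close>,
  which happens before time \<open>T(\<parallel>\<chi>\<^sub>1(0)\<parallel>, \<mu>) / \<delta>\<close> once \<open>\<delta>\<close> is small. These settling times, together with
  \<open>\<parallel>\<chi>\<^sub>1(t)\<parallel> \<le> c \<parallel>\<chi>\<^sub>1(0)\<parallel> + v\<close>, are finally packaged into a single class-\<open>\<K>\<L>\<close> function.
\<close>

section \<open>Scalar differential inequalities\<close>

lemma has_real_derivative_at_of_within_atLeast:
  assumes "(W has_real_derivative D) (at t within {0..})" and "0 < t"
  shows "(W has_real_derivative D) (at t)"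
proof -
  have "(W has_real_derivative D) (at t within {0<..})"
    using assms(1) by (rule DERIV_subset) auto
  then show ?thesis
    using at_within_open[of t "{0<..}"] assms(2) by auto
qed

lemma continuous_on_atLeast_of_derivative:
  assumes "\<forall>t\<ge>0. (W has_real_derivative W' t) (at t within {0..})"
  shows "continuous_on {0..} W"
  unfolding continuous_on_eq_continuous_within using assms by (auto intro: DERIV_continuous)

lemma exists_crossing_interval:
  fixes W :: "real \<Rightarrow> real"
  assumes cont: "continuous_on {a..b} W" and "a \<le> b"
    and "W a \<le> m" and "m < c" and "c \<le> W b"
  obtains ta tb where "a \<le> ta" "ta \<le> tb" "tb \<le> b" "W ta \<le> m" "c \<le> W tb"
    and "\<And>t. ta < t \<Longrightarrow> t < tb \<Longrightarrow> m < W t \<and> W t < c"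
proof -
  define S where "S = {t \<in> {a..b}. W t \<le> m}"
  have "closed S"
    unfolding S_def by (intro continuous_on_closed_Collect_le cont continuous_on_const) auto
  moreover have "a \<in> S" using assms by (auto simp: S_def)
  ultimately have taS: "Sup S \<in> S"
    by (intro closed_contains_Sup) (auto simp: S_def bdd_above_def)
  define ta where "ta = Sup S"
  have above_m: "m < W t" if "ta < t" "t \<le> b" for t
  proof (rule ccontr)
    assume "\<not> m < W t"
    then have "t \<in> S" using that taS by (auto simp: S_def ta_def)
    then have "t \<le> ta" unfolding ta_def by (intro cSup_upper) (auto simp: S_def bdd_above_def)
    with that show False by simp
  qed
  define T where "T = {t \<in> {ta..b}. c \<le> W t}"
  have "closed T"
    unfolding T_def using taS
    by (intro continuous_on_closed_Collect_le continuous_on_const continuous_on_subset[OF cont])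
       (auto simp: S_def ta_def)
  moreover have "b \<in> T" using assms taS by (auto simp: T_def S_def ta_def)
  ultimately have tbT: "Inf T \<in> T"
    by (intro closed_contains_Inf) (auto simp: T_def bdd_below_def)
  define tb where "tb = Inf T"
  have below_c: "W t < c" if "ta \<le> t" "t < tb" for t
  proof (rule ccontr)
    assume "\<not> W t < c"
    then have "t \<in> T" using that tbT by (auto simp: T_def tb_def)
    then have "tb \<le> t" unfolding tb_def by (intro cInf_lower) (auto simp: T_def bdd_below_def)
    with that show False by simp
  qed
  show ?thesis
  proof (rule that)
    show "a \<le> ta" "W ta \<le> m" using taS by (auto simp: S_def ta_def)
    show "ta \<le> tb" "tb \<le> b" "c \<le> W tb" using tbT by (auto simp: T_def tb_def)
    show "m < W t \<and> W t < c" if "ta < t" "t < tb" for t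
      using above_m below_c that tbT by (auto simp: T_def tb_def)
  qed
qed

lemma sublevel_forward_invariant:
  fixes W W' :: "real \<Rightarrow> real"
  assumes der: "\<forall>t\<ge>0. (W has_real_derivative W' t) (at t within {0..})"
    and "0 \<le> s" "W s \<le> m" and "m < B"
    and nonincr: "\<And>u. s \<le> u \<Longrightarrow> m \<le> W u \<Longrightarrow> W u \<le> B \<Longrightarrow> W' u \<le> 0"
    and "s \<le> t"
  shows "W t \<le> m"
proof (rule ccontr)
  assume "\<not> W t \<le> m"
  have cont: "continuous_on {s..t} W"
    using continuous_on_atLeast_of_derivative[OF der] by (rule continuous_on_subset) (use assms in auto)
  obtain ta tb where ab: "s \<le> ta" "ta \<le> tb" "tb \<le> t" "W ta \<le> m" "min (W t) B \<le> W tb"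
    and band: "\<And>u. ta < u \<Longrightarrow> u < tb \<Longrightarrow> m < W u \<and> W u < min (W t) B"
    using exists_crossing_interval[OF cont \<open>s \<le> t\<close> \<open>W s \<le> m\<close>, of "min (W t) B"]
      \<open>\<not> W t \<le> m\<close> \<open>m < B\<close> by auto
  have "W tb \<le> W ta"
  proof (rule DERIV_nonpos_imp_decreasing_open[OF \<open>ta \<le> tb\<close>])
    fix u assume "ta < u" "u < tb"
    then have "(W has_real_derivative W' u) (at u)" and "W' u \<le> 0"
      using has_real_derivative_at_of_within_atLeast der band[of u] nonincr[of u] ab assms(2) by auto
    then show "\<exists>y. (W has_real_derivative y) (at u) \<and> y \<le> 0" by blast
  qed (rule continuous_on_subset[OF cont], use ab in auto)
  then show False using ab \<open>\<not> W t \<le> m\<close> \<open>m < B\<close> by linarith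
qed

lemma derivative_le_imp_linear_decrease:
  fixes W W' :: "real \<Rightarrow> real"
  assumes der: "\<forall>t\<ge>0. (W has_real_derivative W' t) (at t within {0..})"
    and "0 \<le> t0" "t0 \<le> t1"
    and rate: "\<And>t. t0 \<le> t \<Longrightarrow> t \<le> t1 \<Longrightarrow> W' t \<le> - k"
  shows "W t1 \<le> W t0 - k * (t1 - t0)"
proof -
  have "W t1 + k * t1 \<le> W t0 + k * t0"
  proof (rule DERIV_nonpos_imp_decreasing_open[OF \<open>t0 \<le> t1\<close>, where f = "\<lambda>t. W t + k * t"])
    fix t assume "t0 < t" "t < t1"
    then have "((\<lambda>t. W t + k * t) has_real_derivative W' t + k) (at t)"
      using has_real_derivative_at_of_within_atLeast der assms(2)
      by (auto intro!: derivative_eq_intros)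
    moreover have "W' t + k \<le> 0" using rate[of t] \<open>t0 < t\<close> \<open>t < t1\<close> by linarith
    ultimately show "\<exists>y. ((\<lambda>t. W t + k * t) has_real_derivative y) (at t) \<and> y \<le> 0" by blast
  next
    show "continuous_on {t0..t1} (\<lambda>t. W t + k * t)"
      using continuous_on_atLeast_of_derivative[OF der] assms(2)
      by (intro continuous_intros) (auto elim: continuous_on_subset)
  qed
  then show ?thesis by (simp add: algebra_simps)
qed

section \<open>Class \<open>\<K>\<L>\<close> functions from settling-time bounds\<close>

definition unit_clamp :: "real \<Rightarrow> real" where
  "unit_clamp x = max 0 (min 1 x)"

lemma unit_clamp_bounds: "0 \<le> unit_clamp x" "unit_clamp x \<le> 1"
  by (auto simp: unit_clamp_def)

lemma unit_clamp_lipschitz: "\<bar>unit_clamp x - unit_clamp y\<bar> \<le> \<bar>x - y\<bar>"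
  by (simp add: unit_clamp_def)

lemma unit_clamp_mono: "x \<le> y \<Longrightarrow> unit_clamp x \<le> unit_clamp y"
  by (simp add: unit_clamp_def)

lemma unit_clamp_nonpos [simp]: "x \<le> 0 \<Longrightarrow> unit_clamp x = 0"
  by (simp add: unit_clamp_def)

lemma unit_clamp_ge_one [simp]: "1 \<le> x \<Longrightarrow> unit_clamp x = 1"
  by (simp add: unit_clamp_def)

lemma cSup_image_le_cSup_image_add:
  fixes F G :: "'a \<Rightarrow> real"
  assumes "P \<noteq> {}" and "bdd_above (G ` P)" and "\<And>p. p \<in> P \<Longrightarrow> F p \<le> G p + K"
  shows "Sup (F ` P) \<le> Sup (G ` P) + K"
proof (rule cSup_least)
  fix y assume "y \<in> F ` P"
  then obtain p where "p \<in> P" "y = F p" by auto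
  moreover have "G p \<le> Sup (G ` P)" using \<open>p \<in> P\<close> assms(2) by (intro cSup_upper) auto
  ultimately show "y \<le> Sup (G ` P) + K" using assms(3) by fastforce
qed (use assms(1) in simp)

lemma cSup_image_diff_le:
  fixes F G :: "'a \<Rightarrow> real"
  assumes "P \<noteq> {}" and "bdd_above (F ` P)" and "bdd_above (G ` P)"
    and "\<And>p. p \<in> P \<Longrightarrow> \<bar>F p - G p\<bar> \<le> K"
  shows "\<bar>Sup (F ` P) - Sup (G ` P)\<bar> \<le> K"
  using cSup_image_le_cSup_image_add[OF assms(1,3), of F K]
    cSup_image_le_cSup_image_add[OF assms(1,2), of G K] assms(4)
  by (fastforce simp: abs_le_iff)

lemma abs_diff_scaled_product_le:
  fixes u A B A' B' :: real
  assumes "0 \<le> u" "u \<le> L" and "A \<in> {0..1}" "B \<in> {0..1}" "A' \<in> {0..1}" "B' \<in> {0..1}"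
  shows "\<bar>u * A * B - u * A' * B'\<bar> \<le> L * (\<bar>A - A'\<bar> + \<bar>B - B'\<bar>)"
proof -
  have "\<bar>(A - A') * B + A' * (B - B')\<bar> \<le> \<bar>A - A'\<bar> * B + A' * \<bar>B - B'\<bar>"
    using assms by (simp add: abs_mult abs_triangle_ineq[THEN order_trans])
  also have "\<dots> \<le> \<bar>A - A'\<bar> + \<bar>B - B'\<bar>"
    using assms by (intro add_mono mult_right_le_one_le mult_left_le_one_le) auto
  finally have "\<bar>u * ((A - A') * B + A' * (B - B'))\<bar> \<le> L * (\<bar>A - A'\<bar> + \<bar>B - B'\<bar>)"
    using assms by (simp add: abs_mult) (meson abs_ge_zero mult_mono order.trans)
  moreover have "u * A * B - u * A' * B' = u * ((A - A') * B + A' * (B - B'))"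
    by (simp add: algebra_simps)
  ultimately show ?thesis by simp
qed

text \<open>From a settling-time bound \<open>T\<close> (monotone in the initial size) and a residual size \<open>g \<mu>\<close>
  that can be made arbitrarily small, build one class-\<open>\<K>\<L>\<close> function dominating all of them.\<close>
locale KL_construction =
  fixes c :: real and T :: "real \<Rightarrow> real \<Rightarrow> real" and g :: "real \<Rightarrow> real"
  assumes c_pos: "0 < c"
    and T_mono: "\<And>r r' \<mu>. 0 \<le> r \<Longrightarrow> r \<le> r' \<Longrightarrow> 0 < \<mu> \<Longrightarrow> T r \<mu> \<le> T r' \<mu>"
    and g_nonneg: "\<And>\<mu>. 0 < \<mu> \<Longrightarrow> 0 \<le> g \<mu>"
    and g_small: "\<And>\<epsilon>. 0 < \<epsilon> \<Longrightarrow> \<exists>\<mu>>0. g \<mu> < \<epsilon>"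
begin

text \<open>\<open>(\<rho>, \<sigma>, u)\<close> is admissible if a trajectory of initial size \<open>\<rho>\<close> could still have size \<open>u\<close>
  at time \<open>\<sigma>\<close>, as far as the bounds \<open>c \<rho>\<close> and \<open>T\<close>, \<open>g\<close> can tell.\<close>
definition admissible :: "(real \<times> real \<times> real) set" where
  "admissible = {(\<rho>, \<sigma>, u). 0 \<le> \<rho> \<and> 0 \<le> \<sigma> \<and> 0 \<le> u \<and> u \<le> c * \<rho> \<and> (\<forall>\<mu>>0. T \<rho> \<mu> \<le> \<sigma> \<longrightarrow> u \<le> g \<mu>)}"

definition weight :: "real \<Rightarrow> real \<Rightarrow> real \<times> real \<times> real \<Rightarrow> real" where
  "weight r s p = (case p of (\<rho>, \<sigma>, u) \<Rightarrow> u * unit_clamp (1 + \<sigma> - s) * unit_clamp (1 + r - \<rho>))"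

text \<open>The clamps make the supremum Lipschitz in \<open>(r, s)\<close>, at the price of looking at initial
  sizes up to \<open>r + 1\<close> and times down to \<open>s - 1\<close>.\<close>
definition envelope :: "real \<Rightarrow> real \<Rightarrow> real" where
  "envelope r s = Sup (weight r s ` admissible)"

text \<open>The envelope is only nondecreasing in \<open>r\<close>; the term \<open>r e\<^sup>-\<^sup>s\<close> makes \<open>KL\<close> strictly increasing.\<close>
definition KL :: "real \<Rightarrow> real \<Rightarrow> real" where
  "KL r s = min (envelope r s) (c * r) + r * exp (- s)"

lemma zero_admissible: "(0, 0, 0) \<in> admissible"
  using g_nonneg by (auto simp: admissible_def)

lemma weight_nonneg: "p \<in> admissible \<Longrightarrow> 0 \<le> weight r s p"
  by (auto simp: admissible_def weight_def unit_clamp_bounds)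

lemma weight_le_value:
  assumes "(\<rho>, \<sigma>, u) \<in> admissible"
  shows "weight r s (\<rho>, \<sigma>, u) \<le> u"
proof -
  have "unit_clamp (1 + \<sigma> - s) * unit_clamp (1 + r - \<rho>) \<le> 1"
    by (intro mult_le_one unit_clamp_bounds)
  moreover have "0 \<le> u" using assms by (simp add: admissible_def)
  ultimately show ?thesis
    unfolding weight_def by (simp add: mult.assoc mult_left_le)
qed

lemma weight_le_bound: "p \<in> admissible \<Longrightarrow> weight r s p \<le> c * (max r 0 + 1)"
proof (cases p)
  case (fields \<rho> \<sigma> u)
  assume p: "p \<in> admissible"
  show ?thesis
  proof (cases "1 + r - \<rho> \<le> 0")
    case False
    then have "u \<le> c * (max r 0 + 1)"
      using p c_pos by (auto simp: admissible_def fields) (smt (verit, best) mult_left_mono)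
    then show ?thesis using weight_le_value[of \<rho> \<sigma> u r s] p by (auto simp: fields)
  qed (use c_pos in \<open>simp add: fields weight_def\<close>)
qed

lemma bdd_above_weight: "bdd_above (weight r s ` admissible)"
  by (intro bdd_aboveI2[where M = "c * (max r 0 + 1)"]) (rule weight_le_bound)

lemma weight_le_envelope: "p \<in> admissible \<Longrightarrow> weight r s p \<le> envelope r s"
  unfolding envelope_def using bdd_above_weight by (intro cSup_upper) auto

lemma envelope_nonneg: "0 \<le> envelope r s"
  using weight_le_envelope[OF zero_admissible, of r s] weight_nonneg[OF zero_admissible, of r s]
  by (rule order.trans[rotated])

lemma admissible_le_envelope: "(r, s, u) \<in> admissible \<Longrightarrow> u \<le> envelope r s"
  using weight_le_envelope[of "(r, s, u)" r s] by (simp add: weight_def)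

lemma envelope_le_envelope:
  assumes "\<And>p. p \<in> admissible \<Longrightarrow> weight r s p \<le> weight r' s' p"
  shows "envelope r s \<le> envelope r' s'"
  unfolding envelope_def
proof (rule cSup_least)
  fix y assume "y \<in> weight r s ` admissible"
  then obtain p where "p \<in> admissible" "y = weight r s p" by blast
  then show "y \<le> Sup (weight r' s' ` admissible)"
    using assms weight_le_envelope[of p r' s'] by (fastforce simp: envelope_def)
qed (use zero_admissible in auto)

lemma envelope_antimono: "s \<le> s' \<Longrightarrow> envelope r s' \<le> envelope r s"
  by (intro envelope_le_envelope)
     (auto simp: admissible_def weight_def unit_clamp_bounds
           intro!: mult_right_mono mult_left_mono unit_clamp_mono)

lemma envelope_mono: "r \<le> r' \<Longrightarrow> envelope r s \<le> envelope r' s"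
  by (intro envelope_le_envelope)
     (auto simp: admissible_def weight_def unit_clamp_bounds
           intro!: mult_left_mono unit_clamp_mono mult_nonneg_nonneg)

lemma envelope_eventually_small:
  assumes "0 \<le> r" "0 < \<epsilon>"
  shows "\<exists>S. \<forall>s\<ge>S. envelope r s \<le> \<epsilon>"
proof -
  obtain \<mu> where \<mu>: "\<mu> > 0" "g \<mu> < \<epsilon>" using g_small assms(2) by blast
  have "envelope r s \<le> \<epsilon>" if s: "T (r + 1) \<mu> + 1 \<le> s" for s
    unfolding envelope_def
  proof (rule cSup_least)
    fix y assume "y \<in> weight r s ` admissible"
    then obtain \<rho> \<sigma> u where p: "(\<rho>, \<sigma>, u) \<in> admissible" "y = weight r s (\<rho>, \<sigma>, u)" by auto
    show "y \<le> \<epsilon>"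
    proof (cases "1 + \<sigma> - s \<le> 0 \<or> 1 + r - \<rho> \<le> 0")
      case False
      then have "T \<rho> \<mu> \<le> \<sigma>"
        using T_mono[of \<rho> "r + 1" \<mu>] p s \<mu> by (auto simp: admissible_def)
      then have "u \<le> g \<mu>" using p \<mu> by (auto simp: admissible_def)
      then show ?thesis using weight_le_value[OF p(1), of r s] p \<mu> by simp
    qed (use p assms in \<open>auto simp: weight_def\<close>)
  qed (use zero_admissible in auto)
  then show ?thesis by blast
qed

lemma envelope_lipschitz:
  assumes "0 \<le> r" "r \<le> R" "0 \<le> r'" "r' \<le> R"
  shows "\<bar>envelope r s - envelope r' s'\<bar> \<le> c * (R + 1) * (\<bar>s - s'\<bar> + \<bar>r - r'\<bar>)"
  unfolding envelope_def
proof (rule cSup_image_diff_le[OF _ bdd_above_weight bdd_above_weight])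
  fix p assume "p \<in> admissible"
  then obtain \<rho> \<sigma> u where p: "p = (\<rho>, \<sigma>, u)" "(\<rho>, \<sigma>, u) \<in> admissible" by (cases p) auto
  show "\<bar>weight r s p - weight r' s' p\<bar> \<le> c * (R + 1) * (\<bar>s - s'\<bar> + \<bar>r - r'\<bar>)"
  proof (cases "R + 1 \<le> \<rho>")
    case False
    have "0 \<le> u" "u \<le> c * (R + 1)"
      using p False c_pos by (auto simp: admissible_def) (smt (verit, best) mult_left_mono)
    then have "\<bar>weight r s p - weight r' s' p\<bar>
        \<le> c * (R + 1) * (\<bar>unit_clamp (1 + \<sigma> - s) - unit_clamp (1 + \<sigma> - s')\<bar>
                         + \<bar>unit_clamp (1 + r - \<rho>) - unit_clamp (1 + r' - \<rho>)\<bar>)"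
      unfolding p weight_def case_prod_conv by (intro abs_diff_scaled_product_le) (auto simp: unit_clamp_bounds)
    also have "\<dots> \<le> c * (R + 1) * (\<bar>s - s'\<bar> + \<bar>r - r'\<bar>)"
      using unit_clamp_lipschitz[of "1 + \<sigma> - s" "1 + \<sigma> - s'"]
        unit_clamp_lipschitz[of "1 + r - \<rho>" "1 + r' - \<rho>"] c_pos assms
      by (intro mult_left_mono) auto
    finally show ?thesis .
  qed (use assms c_pos in \<open>simp add: p weight_def\<close>)
qed (use zero_admissible in auto)

lemma continuous_on_envelope: "continuous_on ({0..} \<times> {0..}) (\<lambda>p. envelope (fst p) (snd p))"
  unfolding continuous_on_iff
proof (intro ballI allI impI)
  fix p :: "real \<times> real" and e :: real
  assume p: "p \<in> {0..} \<times> {0..}" and "0 < e"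
  obtain r s where rs: "p = (r, s)" by (cases p)
  define L where "L = c * (r + 2)"
  have "0 < L" using c_pos p by (simp add: L_def rs)
  define d where "d = min 1 (e / (2 * L))"
  have "0 < d" using \<open>0 < e\<close> \<open>0 < L\<close> by (simp add: d_def)
  moreover have "dist (envelope (fst q) (snd q)) (envelope (fst p) (snd p)) < e"
    if q: "q \<in> {0..} \<times> {0..}" "dist q p < d" for q
  proof -
    obtain r' s' where rs': "q = (r', s')" by (cases q)
    have "\<bar>r' - r\<bar> \<le> dist q p" "\<bar>s' - s\<bar> \<le> dist q p"
      by (auto simp: rs rs' dist_Pair_Pair dist_real_def
               intro: real_sqrt_sum_squares_ge1 real_sqrt_sum_squares_ge2)
    then have "\<bar>r' - r\<bar> < d" "\<bar>s' - s\<bar> < d" using q(2) by linarith+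
    then have "\<bar>envelope r' s' - envelope r s\<bar> \<le> L * (\<bar>s' - s\<bar> + \<bar>r' - r\<bar>)"
      using envelope_lipschitz[of r' "r + 1" r s' s] p q rs rs'
      by (auto simp: L_def d_def algebra_simps)
    also have "\<dots> < L * (2 * d)"
      using \<open>\<bar>r' - r\<bar> < d\<close> \<open>\<bar>s' - s\<bar> < d\<close> \<open>0 < L\<close> by (intro mult_strict_left_mono) auto
    also have "\<dots> \<le> e" using \<open>0 < L\<close> \<open>0 < e\<close> by (simp add: d_def field_simps min_def)
    finally show ?thesis by (simp add: rs rs' dist_real_def)
  qed
  ultimately show "\<exists>d>0. \<forall>q\<in>{0..} \<times> {0..}. dist q p < d \<longrightarrow>
      dist (envelope (fst q) (snd q)) (envelope (fst p) (snd p)) < e"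
    by blast
qed

lemma continuous_on_KL: "continuous_on ({0..} \<times> {0..}) (\<lambda>(r, s). KL r s)"
  using continuous_on_envelope unfolding KL_def case_prod_beta
  by (intro continuous_intros)

lemma class_K_KL: "0 \<le> s \<Longrightarrow> class_K (\<lambda>r. KL r s)"
  unfolding class_K_def
proof (intro conjI)
  assume "0 \<le> s"
  have "continuous_on {0..} (\<lambda>r. (\<lambda>(r, s). KL r s) (r, s))"
    by (rule continuous_on_compose2[OF continuous_on_KL])
       (use \<open>0 \<le> s\<close> in \<open>auto intro!: continuous_intros\<close>)
  then show "continuous_on {0..} (\<lambda>r. KL r s)" by simp
  show "KL 0 s = 0" using envelope_nonneg[of 0 s] by (simp add: KL_def)
  show "strict_mono_on {0..} (\<lambda>r. KL r s)"
  proof (rule strict_mono_onI)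
    fix r r' :: real assume "r \<in> {0..}" "r' \<in> {0..}" "r < r'"
    then have "min (envelope r s) (c * r) \<le> min (envelope r' s) (c * r')"
      using envelope_mono[of r r' s] c_pos by (intro min.mono) auto
    moreover have "r * exp (- s) < r' * exp (- s)" using \<open>r < r'\<close> by simp
    ultimately show "KL r s < KL r' s" unfolding KL_def by (rule add_le_less_mono)
  qed
qed

lemma antimono_KL: "0 \<le> r \<Longrightarrow> antimono_on {0..} (KL r)"
proof (intro monotone_onI)
  fix s s' :: real assume "0 \<le> r" "s \<le> s'"
  then have "min (envelope r s') (c * r) \<le> min (envelope r s) (c * r)"
    and "r * exp (- s') \<le> r * exp (- s)"
    using envelope_antimono[of s s' r] by (auto intro: min.mono mult_left_mono)
  then show "KL r s' \<le> KL r s" by (simp add: KL_def)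
qed

lemma KL_tendsto_zero:
  assumes "0 \<le> r"
  shows "(KL r \<longlongrightarrow> 0) at_top"
proof -
  have "((\<lambda>s. r * exp (- s)) \<longlongrightarrow> 0) at_top"
    by (intro tendsto_mult_right_zero filterlim_compose[OF exp_at_bot filterlim_uminus_at_bot_at_top])
  moreover have "((\<lambda>s. min (envelope r s) (c * r)) \<longlongrightarrow> 0) at_top"
  proof (rule order_tendstoI)
    fix b :: real assume "0 < b"
    then obtain S where "\<forall>s\<ge>S. envelope r s \<le> b / 2"
      using envelope_eventually_small[OF assms, of "b / 2"] by auto
    moreover have "b / 2 < b" using \<open>0 < b\<close> by simp
    ultimately show "\<forall>\<^sub>F s in at_top. min (envelope r s) (c * r) < b"
      unfolding eventually_at_top_linorder by (meson min.strict_coboundedI1 order_le_less_trans)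
  next
    fix a :: real assume "a < 0"
    then show "\<forall>\<^sub>F s in at_top. a < min (envelope r s) (c * r)"
      using envelope_nonneg[of r] c_pos assms
      by (intro always_eventually allI) (smt (verit) mult_nonneg_nonneg)
  qed
  ultimately show ?thesis unfolding KL_def[abs_def] by (rule tendsto_add_zero[rotated])
qed

lemma class_KL_KL: "class_KL KL"
  unfolding class_KL_def using continuous_on_KL class_K_KL antimono_KL KL_tendsto_zero by blast

lemma KL_dominates:
  assumes "0 \<le> r" "0 \<le> s" "0 \<le> u" "u \<le> c * r" "\<And>\<mu>. 0 < \<mu> \<Longrightarrow> T r \<mu> \<le> s \<Longrightarrow> u \<le> g \<mu>"
  shows "u \<le> KL r s"
proof -
  have "u \<le> envelope r s" using assms by (intro admissible_le_envelope) (auto simp: admissible_def)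
  then show ?thesis using assms unfolding KL_def by (intro add_increasing2) auto
qed

lemma KL_bound:
  assumes "0 \<le> r" "0 \<le> s" "y \<le> c * r + v" "\<And>\<mu>. 0 < \<mu> \<Longrightarrow> T r \<mu> \<le> s \<Longrightarrow> y - v \<le> g \<mu>"
  shows "y \<le> KL r s + v"
proof -
  have "max 0 (y - v) \<le> KL r s"
    using assms c_pos g_nonneg by (intro KL_dominates) auto
  then show ?thesis by linarith
qed

end

section \<open>Partial derivatives\<close>

lemma has_real_derivative_vec_nth:
  fixes x :: "real \<Rightarrow> real^'n::finite"
  assumes "(x has_vector_derivative x') F"
  shows "((\<lambda>t. x t $ j) has_real_derivative x' $ j) F"
  using bounded_linear.has_vector_derivative[OF bounded_linear_vec_nth assms]
  by (simp add: has_real_derivative_iff_has_vector_derivative)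

lemma frechet_derivative_eq_sum_pderiv_k:
  fixes h :: "real^'n::finite \<Rightarrow> real"
  assumes "h differentiable (at y)"
  shows "frechet_derivative h (at y) v = (\<Sum>i\<in>UNIV. v $ i * pderiv_k h i y)"
proof -
  have lin: "linear (frechet_derivative h (at y))"
    using assms frechet_derivative_works has_derivative_linear by blast
  have "v = (\<Sum>i\<in>UNIV. v $ i *\<^sub>R axis i 1)"
    using basis_expansion[of v] by (simp add: scalar_mult_eq_scaleR)
  then have "frechet_derivative h (at y) v = frechet_derivative h (at y) (\<Sum>i\<in>UNIV. v $ i *\<^sub>R axis i 1)"
    by simp
  also have "\<dots> = (\<Sum>i\<in>UNIV. v $ i * frechet_derivative h (at y) (axis i 1))"
    using lin by (simp add: linear_sum linear_scale)
  finally show ?thesis by (simp add: pderiv_k_def)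
qed

lemma DERIV_comp_pderiv_k:
  fixes h :: "real^'n::finite \<Rightarrow> real" and x :: "real \<Rightarrow> real^'n"
  assumes dh: "h differentiable (at (x t))" and dx: "(x has_vector_derivative x') (at t within S)"
  shows "((\<lambda>t. h (x t)) has_real_derivative (\<Sum>i\<in>UNIV. x' $ i * pderiv_k h i (x t))) (at t within S)"
proof -
  have hd: "(h has_derivative frechet_derivative h (at (x t))) (at (x t))"
    using dh frechet_derivative_works by blast
  have "((\<lambda>t. h (x t)) has_derivative (\<lambda>s. frechet_derivative h (at (x t)) (s *\<^sub>R x'))) (at t within S)"
    using has_derivative_compose[OF dx[unfolded has_vector_derivative_def] hd] by (simp add: o_def)
  moreover have "linear (frechet_derivative h (at (x t)))"
    using hd has_derivative_linear by blast
  ultimately have "((\<lambda>t. h (x t)) has_derivative (\<lambda>s. s * frechet_derivative h (at (x t)) x')) (at t within S)"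
    by (simp add: linear_scale)
  then have "((\<lambda>t. h (x t)) has_real_derivative frechet_derivative h (at (x t)) x') (at t within S)"
    unfolding has_field_derivative_def by (simp add: mult.commute[of _ "frechet_derivative h (at (x t)) x'"])
  then show ?thesis using frechet_derivative_eq_sum_pderiv_k[OF dh] by simp
qed

lemma pderiv_k_sum:
  fixes f :: "'j \<Rightarrow> real^'n::finite \<Rightarrow> real"
  assumes "finite J" and "\<And>j. j \<in> J \<Longrightarrow> f j differentiable (at y)"
  shows "pderiv_k (\<lambda>z. \<Sum>j\<in>J. f j z) k y = (\<Sum>j\<in>J. pderiv_k (f j) k y)"
proof -
  have "((\<lambda>z. \<Sum>j\<in>J. f j z) has_derivative (\<lambda>v. \<Sum>j\<in>J. frechet_derivative (f j) (at y) v)) (at y)"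
    using assms frechet_derivative_works by (intro has_derivative_sum) blast
  then have "frechet_derivative (\<lambda>z. \<Sum>j\<in>J. f j z) (at y) = (\<lambda>v. \<Sum>j\<in>J. frechet_derivative (f j) (at y) v)"
    using frechet_derivative_at by metis
  then show ?thesis by (simp add: pderiv_k_def)
qed

lemma pderiv_k_eq_0_if_not_depends_on:
  fixes h :: "real^'n::finite \<Rightarrow> real"
  assumes "\<not> depends_on h k" and "h differentiable (at y)"
  shows "pderiv_k h k y = 0"
proof -
  have hd: "(h has_derivative frechet_derivative h (at y)) (at y)"
    using assms(2) frechet_derivative_works by blast
  have "((\<lambda>s::real. y + s *\<^sub>R axis k 1) has_derivative (\<lambda>s. s *\<^sub>R axis k 1)) (at 0)"
    by (intro derivative_eq_intros) auto
  from has_derivative_compose[OF this] hd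
  have "((\<lambda>s. h (y + s *\<^sub>R axis k 1)) has_derivative (\<lambda>s. frechet_derivative h (at y) (s *\<^sub>R axis k 1))) (at 0)"
    by (simp add: o_def)
  moreover have "h (y + s *\<^sub>R axis k 1) = h y" for s
  proof -
    have "y + s *\<^sub>R axis k 1 = (\<chi> i. if i = k then y $ k + s else y $ i)"
      by (vector axis_def)
    then show ?thesis using assms(1) unfolding depends_on_def by metis
  qed
  ultimately have "((\<lambda>s. h y) has_derivative (\<lambda>s. frechet_derivative h (at y) (s *\<^sub>R axis k 1))) (at (0::real))"
    by simp
  then have "(\<lambda>s. frechet_derivative h (at y) (s *\<^sub>R axis k 1)) = (\<lambda>s. 0)"
    using has_derivative_unique has_derivative_const by blast
  then show ?thesis unfolding pderiv_k_def by (metis scaleR_one)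
qed

lemma pderiv_k_eq_0_at_min:
  fixes h :: "real^'n::finite \<Rightarrow> real"
  assumes "h differentiable (at y)" and "\<And>z. h y \<le> h z"
  shows "pderiv_k h k y = 0"
proof -
  have "frechet_derivative h (at y) = (\<lambda>h. 0)"
    using assms by (intro has_derivative_local_min[OF frechet_derivative_works[THEN iffD1]]) auto
  then show ?thesis by (simp add: pderiv_k_def)
qed

lemma C2_fun_differentiable: "C2_fun h \<Longrightarrow> h differentiable (at y)"
  unfolding C2_fun_def by auto

lemma C2_fun_pderiv_k_differentiable: "C2_fun h \<Longrightarrow> pderiv_k h k differentiable (at y)"
  unfolding C2_fun_def C1_fun_def by auto

lemma C2_fun_continuous_pderiv_k: "C2_fun h \<Longrightarrow> continuous_on UNIV (pderiv_k h k)"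
  using C2_fun_pderiv_k_differentiable
  by (meson differentiable_at_imp_differentiable_on differentiable_imp_continuous_on)

lemma C2_fun_continuous_pderiv_k2: "C2_fun h \<Longrightarrow> continuous_on UNIV (pderiv_k (pderiv_k h k) i)"
  unfolding C2_fun_def C1_fun_def by auto

section \<open>Orthonormal completion and Laplacian coercivity\<close>

lemma inner_vec_eq_sum_support:
  fixes a b :: "real^'n::finite"
  assumes "\<And>j. j \<notin> V \<Longrightarrow> a $ j = 0"
  shows "a \<bullet> b = (\<Sum>j\<in>V. a $ j * b $ j)"
proof -
  have "a \<bullet> b = (\<Sum>j\<in>UNIV. if j \<in> V then a $ j * b $ j else 0)"
    unfolding inner_vec_def using assms by (intro sum.cong) auto
  also have "\<dots> = (\<Sum>j\<in>V. a $ j * b $ j)" by (simp add: sum.If_cases)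
  finally show ?thesis .
qed

lemma norm_sq_eq_sum_vec: "(norm (e :: real^'n::finite))\<^sup>2 = (\<Sum>j\<in>UNIV. (e $ j)\<^sup>2)"
  by (simp only: power2_norm_eq_inner inner_vec_def) (simp add: power2_eq_square)

lemma norm_sq_eq_sum_support:
  fixes z :: "real^'n::finite"
  assumes "\<forall>j. j \<notin> V \<longrightarrow> z $ j = 0"
  shows "(norm z)\<^sup>2 = (\<Sum>j\<in>V. (z $ j)\<^sup>2)"
  unfolding power2_norm_eq_inner using inner_vec_eq_sum_support[of V z z] assms
  by (simp add: power2_eq_square)

lemma dim_vectors_supported_on: "dim {x :: real^'n::finite. \<forall>j. j \<notin> V \<longrightarrow> x $ j = 0} = card V"
  using dim_substandard_cart[where 'a = real, of V] dim_vec_eq[of "{x :: real^'n. \<forall>j. j \<notin> V \<longrightarrow> x $ j = 0}"]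
  by simp

lemma norm_sq_eq_sum_inner_sq_orthonormal:
  fixes u :: "nat \<Rightarrow> 'a::euclidean_space"
  assumes orth: "\<And>i i'. i < N \<Longrightarrow> i' < N \<Longrightarrow> u i \<bullet> u i' = (if i = i' then 1 else 0)"
    and "u ` {..<N} \<subseteq> S" "dim S = N" "Y \<in> S"
  shows "Y \<bullet> Y = (\<Sum>i<N. (u i \<bullet> Y)\<^sup>2)"
proof -
  define B where "B = u ` {..<N}"
  have inj: "inj_on u {..<N}"
  proof (rule inj_onI)
    fix i i' assume "i \<in> {..<N}" "i' \<in> {..<N}" "u i = u i'"
    then show "i = i'" using orth[of i i'] orth[of i' i'] by (auto split: if_splits)
  qed
  have "pairwise orthogonal B"
    using orth by (auto simp: B_def pairwise_def orthogonal_def)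
  moreover have "0 \<notin> B"
  proof
    assume "0 \<in> B"
    then obtain i where "i < N" "u i = 0" by (auto simp: B_def)
    then show False using orth[of i i] by simp
  qed
  ultimately have "independent B" by (rule pairwise_orthogonal_independent)
  moreover have "card B = N" using inj by (simp add: B_def card_image)
  ultimately have "S \<subseteq> span B" using card_eq_dim[of B S] assms(2,3) by (simp add: B_def)
  moreover have "\<And>b. b \<in> B \<Longrightarrow> norm b = 1" using orth by (auto simp: B_def norm_eq_1)
  ultimately have "(\<Sum>b\<in>B. (Y \<bullet> b) *\<^sub>R b) = Y"
    using \<open>pairwise orthogonal B\<close> assms(4) by (intro orthonormal_basis_expand) (auto simp: B_def)
  then have "Y \<bullet> Y = (\<Sum>b\<in>B. (Y \<bullet> b) *\<^sub>R b) \<bullet> Y" by simp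
  also have "\<dots> = (\<Sum>b\<in>B. (Y \<bullet> b) * (b \<bullet> Y))"
    by (simp add: inner_sum_left)
  also have "\<dots> = (\<Sum>i<N. (u i \<bullet> Y)\<^sup>2)"
    using inj by (simp add: B_def sum.reindex power2_eq_square inner_commute)
  finally show ?thesis .
qed

text \<open>Completing the columns of \<open>R\<close> by \<open>\<one>/\<surd>N\<close> gives an orthonormal basis of the coordinates in
  \<open>V\<close>, so \<open>R\<^sup>T y\<close> carries all of \<open>|y|\<^sup>2\<close> except the part along \<open>\<one>\<close>.\<close>
lemma sum_sq_orthonormal_complement:
  fixes V :: "'n::finite set" and R :: "nat \<Rightarrow> 'n \<Rightarrow> real" and y :: "'n \<Rightarrow> real"
  assumes "V \<noteq> {}"
    and orth: "\<And>i i'. i < card V - 1 \<Longrightarrow> i' < card V - 1 \<Longrightarrow>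
        (\<Sum>j\<in>V. R i j * R i' j) = (if i = i' then 1 else 0)"
    and perp: "\<And>i. i < card V - 1 \<Longrightarrow> (\<Sum>j\<in>V. R i j) = 0"
  shows "(\<Sum>i<card V - 1. (\<Sum>j\<in>V. R i j * y j)\<^sup>2) + (\<Sum>j\<in>V. y j)\<^sup>2 / card V = (\<Sum>j\<in>V. (y j)\<^sup>2)"
proof -
  define N where "N = card V"
  have "1 \<le> N" using assms(1) unfolding N_def by (simp add: Suc_le_eq card_gt_0_iff)
  define u :: "nat \<Rightarrow> real^'n" where
    "u i = (\<chi> j. if j \<in> V then (if i < N - 1 then R i j else 1 / sqrt N) else 0)" for i
  define Y :: "real^'n" where "Y = (\<chi> j. if j \<in> V then y j else 0)"
  have inner_u: "u i \<bullet> Z = (\<Sum>j\<in>V. u i $ j * Z $ j)" for i Z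
    by (rule inner_vec_eq_sum_support) (simp add: u_def)
  have "u i \<bullet> u i' = (if i = i' then 1 else 0)" if "i < N" "i' < N" for i i'
  proof (cases "i < N - 1"; cases "i' < N - 1")
    assume "i < N - 1" "i' < N - 1"
    then show ?thesis using orth[of i i'] by (simp only: inner_u) (simp add: u_def N_def)
  next
    assume "i < N - 1" "\<not> i' < N - 1"
    then show ?thesis using perp[of i]
      by (simp only: inner_u) (simp add: u_def N_def sum_divide_distrib[symmetric])
  next
    assume "\<not> i < N - 1" "i' < N - 1"
    then show ?thesis using perp[of i']
      by (simp only: inner_u) (simp add: u_def N_def sum_divide_distrib[symmetric])
  next
    assume "\<not> i < N - 1" "\<not> i' < N - 1"
    then have "i = i'" using that by simp
    moreover have "(\<Sum>j\<in>V. 1 / sqrt N * (1 / sqrt N)) = 1"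
      using \<open>1 \<le> N\<close> assms(1) unfolding N_def by simp
    ultimately show ?thesis using \<open>\<not> i < N - 1\<close> assms(1) by (simp only: inner_u) (simp add: u_def)
  qed
  moreover have "u ` {..<N} \<subseteq> {x. \<forall>j. j \<notin> V \<longrightarrow> x $ j = 0}" "Y \<in> {x. \<forall>j. j \<notin> V \<longrightarrow> x $ j = 0}"
    by (auto simp: u_def Y_def)
  ultimately have "Y \<bullet> Y = (\<Sum>i<N. (u i \<bullet> Y)\<^sup>2)"
    by (intro norm_sq_eq_sum_inner_sq_orthonormal) (auto simp: dim_vectors_supported_on N_def)
  also have "\<dots> = (\<Sum>i<N - 1. (u i \<bullet> Y)\<^sup>2) + (u (N - 1) \<bullet> Y)\<^sup>2"
    using \<open>1 \<le> N\<close> sum.lessThan_Suc[of "\<lambda>i. (u i \<bullet> Y)\<^sup>2" "N - 1"] by simp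
  also have "(\<Sum>i<N - 1. (u i \<bullet> Y)\<^sup>2) = (\<Sum>i<N - 1. (\<Sum>j\<in>V. R i j * y j)\<^sup>2)"
    by (intro sum.cong) (simp_all only: inner_u, auto simp: u_def Y_def)
  also have "(u (N - 1) \<bullet> Y)\<^sup>2 = (\<Sum>j\<in>V. y j)\<^sup>2 / N"
    by (simp only: inner_u) (simp add: u_def Y_def sum_divide_distrib[symmetric] power_divide)
  also have "Y \<bullet> Y = (\<Sum>j\<in>V. (y j)\<^sup>2)"
    by (subst inner_vec_eq_sum_support[of V]) (simp_all add: Y_def power2_eq_square)
  finally show ?thesis by (simp add: N_def)
qed

lemma sum_sq_deviation_eq:
  fixes y :: "'a \<Rightarrow> real"
  assumes "finite A" "A \<noteq> {}"
  shows "(\<Sum>j\<in>A. (y j - (\<Sum>l\<in>A. y l) / card A)\<^sup>2) = (\<Sum>j\<in>A. (y j)\<^sup>2) - (\<Sum>l\<in>A. y l)\<^sup>2 / card A"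
proof -
  define S where "S = (\<Sum>l\<in>A. y l)"
  define N where "N = real (card A)"
  have "N > 0" using assms by (simp add: N_def card_gt_0_iff)
  have "(\<Sum>j\<in>A. (y j - S / N)\<^sup>2) = (\<Sum>j\<in>A. (y j)\<^sup>2 - 2 * (S / N) * y j + (S / N)\<^sup>2)"
    by (intro sum.cong) (auto simp: power2_diff algebra_simps)
  also have "\<dots> = (\<Sum>j\<in>A. (y j)\<^sup>2) - 2 * (S / N) * (\<Sum>j\<in>A. y j) + N * (S / N)\<^sup>2"
    by (simp add: sum.distrib sum_subtractf sum_distrib_left N_def)
  also have "\<dots> = (\<Sum>j\<in>A. (y j)\<^sup>2) - S\<^sup>2 / N"
    using \<open>N > 0\<close> by (simp add: S_def power2_eq_square field_simps)
  finally show ?thesis by (simp add: S_def N_def)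
qed

lemma constant_if_induced_connected:
  assumes "induced_connected a V"
    and "\<And>j l. j \<in> V \<Longrightarrow> l \<in> V \<Longrightarrow> 0 < a j l \<Longrightarrow> z j = z l"
    and "j \<in> V" "l \<in> V"
  shows "z j = z l"
proof -
  have "(j, l) \<in> {(p, q). p \<in> V \<and> q \<in> V \<and> 0 < a p q}\<^sup>*"
    using assms by (auto simp: induced_connected_def)
  then show ?thesis
    by (induction rule: rtrancl_induct) (use assms(2) in auto)
qed

lemma laplacian_form_pos_if_induced_connected:
  fixes a :: "'n::finite \<Rightarrow> 'n \<Rightarrow> real" and z :: "real^'n"
  assumes a_nonneg: "\<And>j l. 0 \<le> a j l" and conn: "induced_connected a V"
    and z: "\<forall>j. j \<notin> V \<longrightarrow> z $ j = 0" "(\<Sum>j\<in>V. z $ j) = 0" "z \<noteq> 0"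
  shows "0 < (\<Sum>j\<in>V. \<Sum>l\<in>V. a j l * (z $ j - z $ l)\<^sup>2)"
proof (rule ccontr)
  assume "\<not> ?thesis"
  moreover have "0 \<le> (\<Sum>j\<in>V. \<Sum>l\<in>V. a j l * (z $ j - z $ l)\<^sup>2)" using a_nonneg by (intro sum_nonneg) auto
  ultimately have "(\<Sum>j\<in>V. \<Sum>l\<in>V. a j l * (z $ j - z $ l)\<^sup>2) = 0" by simp
  then have "\<forall>j\<in>V. \<forall>l\<in>V. a j l * (z $ j - z $ l)\<^sup>2 = 0"
    using a_nonneg by (simp add: sum_nonneg_eq_0_iff sum_nonneg)
  then have const: "z $ j = z $ l" if "j \<in> V" "l \<in> V" for j l
    by (intro constant_if_induced_connected[OF conn _ that]) force
  have "z $ j = 0" for j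
  proof (cases "j \<in> V")
    case True
    have "(\<Sum>l\<in>V. z $ l) = (\<Sum>l\<in>V. z $ j)" by (rule sum.cong[OF refl]) (rule const[OF _ True])
    then have "card V * z $ j = 0" using z(2) by simp
    moreover have "card V \<noteq> 0" using True by (auto simp: card_eq_0_iff)
    ultimately show ?thesis by simp
  qed (use z(1) in blast)
  then show False using z(3) by (simp add: vec_eq_iff)
qed

text \<open>By homogeneity it suffices to bound the form below on the compact set of unit vectors.\<close>
lemma laplacian_coercive_if_induced_connected:
  fixes a :: "'n::finite \<Rightarrow> 'n \<Rightarrow> real"
  assumes a_nonneg: "\<And>j l. 0 \<le> a j l" and conn: "induced_connected a V"
  obtains lm where "0 < lm"
    and "\<And>y. (\<Sum>j\<in>V. y j) = 0 \<Longrightarrow> lm * (\<Sum>j\<in>V. (y j)\<^sup>2) \<le> (\<Sum>j\<in>V. \<Sum>l\<in>V. a j l * (y j - y l)\<^sup>2)"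
proof -
  define Q :: "real^'n \<Rightarrow> real" where "Q z = (\<Sum>j\<in>V. \<Sum>l\<in>V. a j l * (z $ j - z $ l)\<^sup>2)" for z
  define C where "C = {z :: real^'n. (\<forall>j. j \<notin> V \<longrightarrow> z $ j = 0) \<and> (\<Sum>j\<in>V. z $ j) = 0 \<and> norm z = 1}"
  have "closed C" unfolding C_def
    by (intro closed_Collect_conj closed_Collect_all closed_Collect_imp closed_Collect_eq continuous_intros) auto
  moreover have "C = sphere 0 1 \<inter> C" by (auto simp: C_def)
  ultimately have "compact C" by (metis compact_Int_closed compact_sphere)
  obtain lm where "0 < lm" and lm: "\<And>z. z \<in> C \<Longrightarrow> lm \<le> Q z"
  proof (cases "C = {}")
    case False
    have "continuous_on C Q" unfolding Q_def by (intro continuous_intros)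
    then obtain z0 where "z0 \<in> C" "\<forall>z\<in>C. Q z0 \<le> Q z"
      using continuous_attains_inf[OF \<open>compact C\<close> False] by blast
    moreover have "0 < Q z0"
      using \<open>z0 \<in> C\<close> unfolding Q_def C_def by (intro laplacian_form_pos_if_induced_connected[OF a_nonneg conn]) auto
    ultimately show ?thesis using that[of "Q z0"] by blast
  qed (rule that[of 1], auto)
  show ?thesis
  proof (rule that[OF \<open>0 < lm\<close>])
    fix y :: "'n \<Rightarrow> real" assume "(\<Sum>j\<in>V. y j) = 0"
    define z :: "real^'n" where "z = (\<chi> j. if j \<in> V then y j else 0)"
    have "lm * (norm z)\<^sup>2 \<le> Q z"
    proof (cases "z = 0")
      case False
      then have "(1 / norm z) *\<^sub>R z \<in> C"
        using \<open>(\<Sum>j\<in>V. y j) = 0\<close> by (auto simp: C_def z_def sum_divide_distrib[symmetric])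
      then have "lm \<le> Q ((1 / norm z) *\<^sub>R z)" by (rule lm)
      also have "\<dots> = Q z / (norm z)\<^sup>2"
        by (simp add: Q_def sum_divide_distrib power_divide flip: diff_divide_distrib)
      finally show ?thesis using False by (simp add: field_simps)
    qed (simp add: Q_def)
    then show "lm * (\<Sum>j\<in>V. (y j)\<^sup>2) \<le> (\<Sum>j\<in>V. \<Sum>l\<in>V. a j l * (y j - y l)\<^sup>2)"
      using norm_sq_eq_sum_support[of V z] by (simp add: Q_def z_def)
  qed
qed

lemma laplacian_coercive_uniform:
  fixes a :: "'n::finite \<Rightarrow> 'n \<Rightarrow> real" and Vs :: "'k::finite \<Rightarrow> 'n set"
  assumes "\<And>j l. 0 \<le> a j l" and "\<And>k. induced_connected a (Vs k)"
  obtains lm where "0 < lm"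
    and "\<forall>\<epsilon>. (\<forall>k. (\<Sum>j\<in>Vs k. \<epsilon> j k) = 0) \<longrightarrow>
      lm * (\<Sum>k\<in>UNIV. \<Sum>j\<in>Vs k. (\<epsilon> j k)\<^sup>2) \<le> (\<Sum>k\<in>UNIV. \<Sum>j\<in>Vs k. \<Sum>l\<in>Vs k. a j l * (\<epsilon> j k - \<epsilon> l k)\<^sup>2)"
proof -
  define gap where "gap k l \<longleftrightarrow> 0 < l \<and> (\<forall>y. (\<Sum>j\<in>Vs k. y j) = 0 \<longrightarrow>
      l * (\<Sum>j\<in>Vs k. (y j)\<^sup>2) \<le> (\<Sum>j\<in>Vs k. \<Sum>l\<in>Vs k. a j l * (y j - y l)\<^sup>2))" for k l
  have "\<exists>l. gap k l" for k
    unfolding gap_def by (rule laplacian_coercive_if_induced_connected[OF assms(1) assms(2)[of k]]) blast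
  then have "\<exists>lk. \<forall>k. gap k (lk k)" by (intro choice allI)
  then obtain lk where pos: "\<And>k. 0 < lk k" and gap: "\<And>k y. (\<Sum>j\<in>Vs k. y j) = 0 \<Longrightarrow>
      lk k * (\<Sum>j\<in>Vs k. (y j)\<^sup>2) \<le> (\<Sum>j\<in>Vs k. \<Sum>l\<in>Vs k. a j l * (y j - y l)\<^sup>2)"
    unfolding gap_def by blast
  show ?thesis
  proof (rule that[of "Min (range lk)"])
    show "0 < Min (range lk)" using pos by simp
    show "\<forall>\<epsilon>. (\<forall>k. (\<Sum>j\<in>Vs k. \<epsilon> j k) = 0) \<longrightarrow> Min (range lk) * (\<Sum>k\<in>UNIV. \<Sum>j\<in>Vs k. (\<epsilon> j k)\<^sup>2)
        \<le> (\<Sum>k\<in>UNIV. \<Sum>j\<in>Vs k. \<Sum>l\<in>Vs k. a j l * (\<epsilon> j k - \<epsilon> l k)\<^sup>2)"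
    proof (intro allI impI)
      fix \<epsilon> :: "'n \<Rightarrow> 'k \<Rightarrow> real" assume zero: "\<forall>k. (\<Sum>j\<in>Vs k. \<epsilon> j k) = 0"
    have "Min (range lk) * (\<Sum>j\<in>Vs k. (\<epsilon> j k)\<^sup>2) \<le> (\<Sum>j\<in>Vs k. \<Sum>l\<in>Vs k. a j l * (\<epsilon> j k - \<epsilon> l k)\<^sup>2)" for k
    proof -
      have "Min (range lk) \<le> lk k" by simp
      then have "Min (range lk) * (\<Sum>j\<in>Vs k. (\<epsilon> j k)\<^sup>2) \<le> lk k * (\<Sum>j\<in>Vs k. (\<epsilon> j k)\<^sup>2)"
        by (intro mult_right_mono sum_nonneg) auto
      also have "\<dots> \<le> (\<Sum>j\<in>Vs k. \<Sum>l\<in>Vs k. a j l * (\<epsilon> j k - \<epsilon> l k)\<^sup>2)"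
        by (rule gap) (use zero in blast)
      finally show ?thesis .
    qed
    then show "Min (range lk) * (\<Sum>k\<in>UNIV. \<Sum>j\<in>Vs k. (\<epsilon> j k)\<^sup>2)
        \<le> (\<Sum>k\<in>UNIV. \<Sum>j\<in>Vs k. \<Sum>l\<in>Vs k. a j l * (\<epsilon> j k - \<epsilon> l k)\<^sup>2)"
      by (simp add: sum_distrib_left sum_mono)
    qed
  qed
qed

section \<open>The social cost and the potential\<close>

lemma VC_commute: "j \<in> VC f k \<longleftrightarrow> k \<in> VC f j"
  unfolding VC_def NI_def by auto

lemma self_in_VC: "k \<in> VC f k"
  unfolding VC_def by auto

lemma VC_nonempty: "VC f k \<noteq> {}"
  using self_in_VC by blast

text \<open>\<open>\<parallel>\<chi>\<^sub>1\<parallel>\<close> does not depend on the choice of \<open>R\<close>: the consensus errors enter only through their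
  deviations from the local averages.\<close>
lemma chi_norm_sq_eq:
  fixes f :: "'n::finite \<Rightarrow> real^'n \<Rightarrow> real"
  assumes "admissible_R f R"
  shows "(chi_norm f R g x xs)\<^sup>2 =
    (\<Sum>k\<in>UNIV. \<Sum>j\<in>VC f k. (g j k - (\<Sum>l\<in>VC f k. g l k) / card (VC f k))\<^sup>2) + (norm (x - xs))\<^sup>2"
proof -
  have "(\<Sum>i<card (VC f k) - 1. (\<Sum>j\<in>VC f k. R k i j * g j k)\<^sup>2)
      = (\<Sum>j\<in>VC f k. (g j k - (\<Sum>l\<in>VC f k. g l k) / card (VC f k))\<^sup>2)" for k
    using sum_sq_orthonormal_complement[OF VC_nonempty[of f k], where R = "R k" and y = "\<lambda>j. g j k"]
      sum_sq_deviation_eq[OF finite VC_nonempty[of f k], of "\<lambda>j. g j k"] assms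
    by (simp add: admissible_R_def)
  moreover have "0 \<le> (\<Sum>k\<in>UNIV. \<Sum>i<card (VC f k) - 1. (\<Sum>j\<in>VC f k. R k i j * g j k)\<^sup>2) + (norm (x - xs))\<^sup>2"
    by (intro add_nonneg_nonneg sum_nonneg) auto
  ultimately show ?thesis unfolding chi_norm_def by simp
qed

definition social_pderiv :: "('n::finite \<Rightarrow> real^'n \<Rightarrow> real) \<Rightarrow> 'n \<Rightarrow> real^'n \<Rightarrow> real" where
  "social_pderiv f k = pderiv_k (\<lambda>z. \<Sum>j\<in>UNIV. f j z) k"

lemma social_pderiv_eq_sum:
  assumes "\<And>j. C2_fun (f j)"
  shows "social_pderiv f k y = (\<Sum>j\<in>UNIV. pderiv_k (f j) k y)"
  unfolding social_pderiv_def using assms C2_fun_differentiable by (intro pderiv_k_sum) auto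

lemma social_pderiv_eq_sum_VC:
  assumes "\<And>j. C2_fun (f j)"
  shows "social_pderiv f k y = (\<Sum>j\<in>VC f k. pderiv_k (f j) k y)"
proof -
  have "(\<Sum>j\<in>UNIV - VC f k. pderiv_k (f j) k y) = 0"
    using assms C2_fun_differentiable
    by (intro sum.neutral ballI pderiv_k_eq_0_if_not_depends_on) (auto simp: VC_def NI_def)
  moreover have "(\<Sum>j\<in>UNIV. pderiv_k (f j) k y)
      = (\<Sum>j\<in>UNIV - VC f k. pderiv_k (f j) k y) + (\<Sum>j\<in>VC f k. pderiv_k (f j) k y)"
    by (rule sum.subset_diff) auto
  ultimately show ?thesis unfolding social_pderiv_eq_sum[OF assms] by simp
qed

lemma continuous_on_social_pderiv:
  assumes "\<And>j. C2_fun (f j)"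
  shows "continuous_on S (social_pderiv f k)"
  unfolding social_pderiv_eq_sum[OF assms, abs_def]
  by (intro continuous_on_sum continuous_on_subset[OF C2_fun_continuous_pderiv_k[OF assms]]) auto

lemma social_pderiv_at_minimizer:
  assumes "\<And>j. C2_fun (f j)" and "\<And>y. (\<Sum>j\<in>UNIV. f j xs) \<le> (\<Sum>j\<in>UNIV. f j y)"
  shows "social_pderiv f k xs = 0"
  unfolding social_pderiv_def
  using assms by (intro pderiv_k_eq_0_at_min differentiable_sum) (auto simp: C2_fun_differentiable)

text \<open>The Lyapunov function of the dynamics splits as \<open>weighted_sq (x - x\<^sup>*) + E\<close>, \<open>E\<close> the consensus
  error; along the dynamics it decreases at rate \<open>\<delta> potential (x - x\<^sup>*, E)\<close>, up to \<open>O(\<delta>\<^sup>2)\<close>.\<close>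
definition weighted_sq :: "('n::finite \<Rightarrow> real^'n \<Rightarrow> real) \<Rightarrow> ('n \<Rightarrow> real) \<Rightarrow> real^'n \<Rightarrow> real" where
  "weighted_sq f dbar e = (\<Sum>j\<in>UNIV. (card (VC f j) / dbar j) * (e $ j)\<^sup>2)"

definition potential :: "('n::finite \<Rightarrow> real^'n \<Rightarrow> real) \<Rightarrow> real \<Rightarrow> real^'n \<Rightarrow> (real^'n) \<times> real \<Rightarrow> real" where
  "potential f lm xs p = 2 * (\<Sum>j\<in>UNIV. fst p $ j * social_pderiv f j (xs + fst p)) + lm / 2 * snd p"

definition level_region :: "('n::finite \<Rightarrow> real^'n \<Rightarrow> real) \<Rightarrow> ('n \<Rightarrow> real) \<Rightarrow> real \<Rightarrow> real \<Rightarrow> ((real^'n) \<times> real) set" where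
  "level_region f dbar \<rho> \<mu> =
     {p. norm (fst p) \<le> \<rho> \<and> 0 \<le> snd p \<and> snd p \<le> \<rho>\<^sup>2 \<and> \<mu> \<le> weighted_sq f dbar (fst p) + snd p}"

lemma level_region_mono:
  "\<rho> \<le> \<rho>' \<Longrightarrow> 0 \<le> \<rho> \<Longrightarrow> \<mu>' \<le> \<mu> \<Longrightarrow> level_region f dbar \<rho> \<mu> \<subseteq> level_region f dbar \<rho>' \<mu>'"
  unfolding level_region_def by (auto intro: order_trans power_mono)

lemma compact_level_region:
  fixes f :: "'n::finite \<Rightarrow> real^'n \<Rightarrow> real"
  shows "compact (level_region f dbar \<rho> \<mu>)"
proof -
  have "level_region f dbar \<rho> \<mu> = (cball 0 \<rho> \<times> cbox 0 (\<rho>\<^sup>2)) \<inter> {p. \<mu> \<le> weighted_sq f dbar (fst p) + snd p}"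
    unfolding level_region_def by (auto simp: dist_norm)
  moreover have "closed {p :: (real^'n) \<times> real. \<mu> \<le> weighted_sq f dbar (fst p) + snd p}"
    unfolding weighted_sq_def by (intro closed_Collect_le continuous_intros)
  ultimately show ?thesis by (simp add: compact_Int_closed compact_Times)
qed

lemma continuous_on_potential:
  fixes f :: "'n::finite \<Rightarrow> real^'n \<Rightarrow> real"
  assumes "\<And>j. C2_fun (f j)"
  shows "continuous_on S (potential f lm xs)"
proof -
  have "continuous_on S (\<lambda>p :: (real^'n) \<times> real. social_pderiv f j (xs + fst p))" for j
    by (rule continuous_on_compose2[OF continuous_on_social_pderiv[OF assms, of UNIV]])
       (auto intro!: continuous_intros)
  then show ?thesis unfolding potential_def[abs_def] by (intro continuous_intros) auto
qed

lemma potential_pos: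
  assumes C2: "\<And>j. C2_fun (f j)"
    and min: "\<And>y. (\<Sum>j\<in>UNIV. f j xs) \<le> (\<Sum>j\<in>UNIV. f j y)"
    and mono: "\<forall>x y. x \<noteq> y \<longrightarrow> 0 < (\<Sum>k\<in>UNIV. (x $ k - y $ k) * (social_pderiv f k x - social_pderiv f k y))"
    and "0 < lm" "0 < \<mu>" and p: "p \<in> level_region f dbar \<rho> \<mu>"
  shows "0 < potential f lm xs p"
proof (cases p)
  case (Pair e E)
  have "0 \<le> E" using p by (auto simp: level_region_def Pair)
  show ?thesis
  proof (cases "e = 0")
    case True
    then have "\<mu> \<le> E" using p by (auto simp: level_region_def weighted_sq_def Pair)
    then show ?thesis using True \<open>0 < lm\<close> \<open>0 < \<mu>\<close> by (simp add: potential_def Pair)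
  next
    case False
    then have "0 < (\<Sum>k\<in>UNIV. e $ k * social_pderiv f k (xs + e))"
      using mono[rule_format, of "xs + e" xs] social_pderiv_at_minimizer[OF C2 min] by simp
    then show ?thesis using \<open>0 \<le> E\<close> \<open>0 < lm\<close> by (simp add: potential_def Pair add_pos_nonneg)
  qed
qed

lemma potential_attains_positive_inf:
  assumes C2: "\<And>j. C2_fun (f j)"
    and min: "\<And>y. (\<Sum>j\<in>UNIV. f j xs) \<le> (\<Sum>j\<in>UNIV. f j y)"
    and mono: "\<forall>x y. x \<noteq> y \<longrightarrow> 0 < (\<Sum>k\<in>UNIV. (x $ k - y $ k) * (social_pderiv f k x - social_pderiv f k y))"
    and "0 < lm" "0 < \<mu>" and ne: "level_region f dbar \<rho> \<mu> \<noteq> {}"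
  shows "0 < Inf (potential f lm xs ` level_region f dbar \<rho> \<mu>)"
    and "\<And>p. p \<in> level_region f dbar \<rho> \<mu> \<Longrightarrow> Inf (potential f lm xs ` level_region f dbar \<rho> \<mu>) \<le> potential f lm xs p"
proof -
  obtain p0 where p0: "p0 \<in> level_region f dbar \<rho> \<mu>"
    and min_p0: "\<forall>p\<in>level_region f dbar \<rho> \<mu>. potential f lm xs p0 \<le> potential f lm xs p"
    using continuous_attains_inf[OF compact_level_region ne continuous_on_potential[where f = f, OF C2]] by blast
  then have inf: "Inf (potential f lm xs ` level_region f dbar \<rho> \<mu>) = potential f lm xs p0"
    by (intro cInf_eq_minimum) auto
  show "0 < Inf (potential f lm xs ` level_region f dbar \<rho> \<mu>)"
    unfolding inf using assms p0 by (intro potential_pos)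
  show "Inf (potential f lm xs ` level_region f dbar \<rho> \<mu>) \<le> potential f lm xs p"
    if "p \<in> level_region f dbar \<rho> \<mu>" for p
    unfolding inf using min_p0 that by blast
qed

section \<open>The distributed gradient dynamics\<close>

lemma sum_le_card_type_mult:
  fixes f :: "'n::finite \<Rightarrow> real" and M :: real
  assumes "\<And>j. j \<in> A \<Longrightarrow> f j \<le> M" and "0 \<le> M"
  shows "(\<Sum>j\<in>A. f j) \<le> CARD('n) * M"
proof -
  have "(\<Sum>j\<in>A. f j) \<le> card A * M" using assms(1) by (rule sum_bounded_above)
  also have "\<dots> \<le> CARD('n) * M" using assms(2) card_mono[of UNIV A] by (intro mult_right_mono) auto
  finally show ?thesis .
qed

lemma sum_laplacian_eq_0:
  fixes a :: "'a \<Rightarrow> 'a \<Rightarrow> real"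
  assumes "\<And>j l. a j l = a l j"
  shows "(\<Sum>j\<in>A. \<Sum>l\<in>A. a j l * (z j - z l)) = 0"
proof -
  have "(\<Sum>j\<in>A. \<Sum>l\<in>A. a j l * z l) = (\<Sum>j\<in>A. \<Sum>l\<in>A. a j l * z j)"
    by (subst sum.swap) (simp add: assms)
  then show ?thesis by (simp add: right_diff_distrib sum_subtractf)
qed

lemma sum_laplacian_quadratic_form:
  fixes a :: "'a \<Rightarrow> 'a \<Rightarrow> real"
  assumes "\<And>j l. a j l = a l j"
  shows "(\<Sum>j\<in>A. z j * (\<Sum>l\<in>A. a j l * (z j - z l))) = (\<Sum>j\<in>A. \<Sum>l\<in>A. a j l * (z j - z l)\<^sup>2) / 2"
proof -
  have swap: "(\<Sum>j\<in>A. \<Sum>l\<in>A. a j l * z j * (z j - z l)) = (\<Sum>j\<in>A. \<Sum>l\<in>A. a j l * z l * (z l - z j))"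
    by (subst sum.swap) (simp add: assms)
  have "(\<Sum>j\<in>A. \<Sum>l\<in>A. a j l * (z j - z l)\<^sup>2) =
      (\<Sum>j\<in>A. \<Sum>l\<in>A. a j l * z j * (z j - z l)) + (\<Sum>j\<in>A. \<Sum>l\<in>A. a j l * z l * (z l - z j))"
    by (simp add: sum.distrib[symmetric] power2_eq_square algebra_simps)
  then show ?thesis using swap by (simp add: sum_distrib_left mult_ac)
qed

text \<open>Derivative of the consensus error along a Laplacian flow perturbed by \<open>h\<close>; \<open>D\<close> is
  the average drift, which drops out because the deviations \<open>e\<close> sum to zero.\<close>
lemma sum_deviation_laplacian_flow:
  fixes a :: "'a \<Rightarrow> 'a \<Rightarrow> real"
  assumes "\<And>j l. a j l = a l j" and "(\<Sum>j\<in>A. e j) = 0"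
  shows "(\<Sum>j\<in>A. 2 * e j * ((- (\<Sum>l\<in>A. a j l * (e j - e l)) + h j) - D))
    = - (\<Sum>j\<in>A. \<Sum>l\<in>A. a j l * (e j - e l)\<^sup>2) + 2 * (\<Sum>j\<in>A. e j * h j)"
proof -
  define L where "L j = (\<Sum>l\<in>A. a j l * (e j - e l))" for j
  have "(\<Sum>j\<in>A. 2 * e j * ((- L j + h j) - D)) = (\<Sum>j\<in>A. - 2 * (e j * L j) + 2 * (e j * h j) - 2 * D * e j)"
    by (intro sum.cong) (auto simp: algebra_simps)
  also have "\<dots> = - 2 * (\<Sum>j\<in>A. e j * L j) + 2 * (\<Sum>j\<in>A. e j * h j) - 2 * D * (\<Sum>j\<in>A. e j)"
    by (simp add: sum.distrib sum_subtractf sum_distrib_left sum_negf)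
  finally have "(\<Sum>j\<in>A. 2 * e j * ((- (\<Sum>l\<in>A. a j l * (e j - e l)) + h j) - D))
      = - 2 * (\<Sum>j\<in>A. e j * (\<Sum>l\<in>A. a j l * (e j - e l))) + 2 * (\<Sum>j\<in>A. e j * h j) - 2 * D * (\<Sum>j\<in>A. e j)"
    by (simp add: L_def)
  then show ?thesis using assms by (simp add: sum_laplacian_quadratic_form)
qed

lemma absorb_sqrt_term:
  fixes lm E K \<delta> :: real
  assumes "0 < lm" "0 \<le> E"
  shows "- lm * E + \<delta> * K * sqrt E \<le> - lm / 2 * E + \<delta>\<^sup>2 * (K\<^sup>2 / (2 * lm))"
proof -
  have "0 \<le> lm / 2 * (sqrt E - \<delta> * K / lm)\<^sup>2" using assms by simp
  also have "\<dots> = lm / 2 * E - \<delta> * K * sqrt E + \<delta>\<^sup>2 * (K\<^sup>2 / (2 * lm))"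
    using assms by (simp add: power2_eq_square field_simps)
  finally show ?thesis by (simp add: algebra_simps)
qed

locale consensus_gradient_dynamics =
  fixes f :: "'n::finite \<Rightarrow> real^'n \<Rightarrow> real" and a :: "'n \<Rightarrow> 'n \<Rightarrow> real" and dbar :: "'n \<Rightarrow> real"
    and \<delta> :: real and x :: "real \<Rightarrow> real^'n" and w :: "'n \<Rightarrow> 'n \<Rightarrow> real \<Rightarrow> real"
  assumes C2: "\<And>j. C2_fun (f j)" and a_sym: "\<And>j l. a j l = a l j"
    and x_deriv: "\<And>t. 0 \<le> t \<Longrightarrow> (x has_vector_derivative
        (\<chi> j. - (\<delta> * dbar j) * (w j j t + pderiv_k (f j) j (x t)))) (at t within {0..})"
    and w_deriv: "\<And>j k t. k \<in> VC f j \<Longrightarrow> 0 \<le> t \<Longrightarrow> (w j k has_vector_derivative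
        (- (\<Sum>l\<in>VC f k. a j l * ((w j k t + pderiv_k (f j) k (x t)) - (w l k t + pderiv_k (f l) k (x t))))))
        (at t within {0..})"
    and w_init: "\<And>j k. k \<in> VC f j \<Longrightarrow> w j k 0 = 0"
    and dbar_pos: "\<And>j. 0 < dbar j"
begin

definition est :: "'n \<Rightarrow> 'n \<Rightarrow> real \<Rightarrow> real" where
  "est j k t = w j k t + pderiv_k (f j) k (x t)"

definition dev :: "'n \<Rightarrow> 'n \<Rightarrow> real \<Rightarrow> real" where
  "dev j k t = est j k t - (\<Sum>l\<in>VC f k. est l k t) / card (VC f k)"

definition consensus_error :: "real \<Rightarrow> real" where
  "consensus_error t = (\<Sum>k\<in>UNIV. \<Sum>j\<in>VC f k. (dev j k t)\<^sup>2)"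

definition drift :: "'n \<Rightarrow> 'n \<Rightarrow> real \<Rightarrow> real" where
  "drift j k t = (\<Sum>i\<in>UNIV. (- (\<delta> * dbar i) * est i i t) * pderiv_k (pderiv_k (f j) k) i (x t))"

definition est_deriv :: "'n \<Rightarrow> 'n \<Rightarrow> real \<Rightarrow> real" where
  "est_deriv j k t = - (\<Sum>l\<in>VC f k. a j l * (est j k t - est l k t)) + drift j k t"

definition lyap :: "real^'n \<Rightarrow> real \<Rightarrow> real" where
  "lyap xs t = weighted_sq f dbar (x t - xs) + consensus_error t"

definition lyap_deriv :: "real^'n \<Rightarrow> real \<Rightarrow> real" where
  "lyap_deriv xs t =
     (\<Sum>j\<in>UNIV. (card (VC f j) / dbar j) * (2 * (x t $ j - xs $ j) * (- (\<delta> * dbar j) * est j j t)))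
   + (\<Sum>k\<in>UNIV. \<Sum>j\<in>VC f k. 2 * dev j k t * (est_deriv j k t - (\<Sum>l\<in>VC f k. est_deriv l k t) / card (VC f k)))"

lemma x_nth_has_derivative:
  "0 \<le> t \<Longrightarrow> ((\<lambda>t. x t $ j) has_real_derivative - (\<delta> * dbar j) * est j j t) (at t within {0..})"
  using has_real_derivative_vec_nth[OF x_deriv] by (simp add: est_def)

lemma w_has_derivative:
  "j \<in> VC f k \<Longrightarrow> 0 \<le> t \<Longrightarrow>
    (w j k has_real_derivative - (\<Sum>l\<in>VC f k. a j l * (est j k t - est l k t))) (at t within {0..})"
  using w_deriv[of k j t] by (simp add: VC_commute has_real_derivative_iff_has_vector_derivative est_def)

lemma est_has_derivative:
  assumes "j \<in> VC f k" "0 \<le> t"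
  shows "((\<lambda>t. est j k t) has_real_derivative est_deriv j k t) (at t within {0..})"
proof -
  have "((\<lambda>t. pderiv_k (f j) k (x t)) has_real_derivative drift j k t) (at t within {0..})"
    using DERIV_comp_pderiv_k[OF C2_fun_pderiv_k_differentiable[OF C2] x_deriv[OF assms(2)]]
    by (simp add: drift_def est_def)
  from DERIV_add[OF w_has_derivative[OF assms] this] show ?thesis
    unfolding est_def[abs_def] est_deriv_def by (simp add: est_def)
qed

text \<open>The consensus dynamics preserves \<open>\<Sum>\<^sub>j w\<^sub>1\<^sub>j\<^sub>k = 0\<close>, so the estimates always average to the true
  partial derivative of the social cost.\<close>
lemma sum_w_eq_0:
  assumes "0 \<le> t"
  shows "(\<Sum>j\<in>VC f k. w j k t) = 0"
proof -
  have "((\<lambda>t. \<Sum>j\<in>VC f k. w j k t) has_real_derivative 0) (at s within {0..})" if "s \<in> {0..}" for s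
  proof -
    have "((\<lambda>t. \<Sum>j\<in>VC f k. w j k t) has_real_derivative
        (\<Sum>j\<in>VC f k. - (\<Sum>l\<in>VC f k. a j l * (est j k s - est l k s)))) (at s within {0..})"
      using that by (intro DERIV_sum w_has_derivative) auto
    then show ?thesis using sum_laplacian_eq_0[OF a_sym, where A = "VC f k"] by (simp add: sum_negf)
  qed
  then obtain c where "\<forall>s\<in>{0..}. (\<Sum>j\<in>VC f k. w j k s) = c"
    using has_field_derivative_zero_constant[of "{0::real..}"] by blast
  moreover have "(\<Sum>j\<in>VC f k. w j k 0) = 0" using w_init by (simp add: VC_commute)
  ultimately show ?thesis using assms by force
qed

lemma sum_est_eq: "0 \<le> t \<Longrightarrow> (\<Sum>j\<in>VC f k. est j k t) = social_pderiv f k (x t)"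
  using sum_w_eq_0 by (simp add: est_def sum.distrib social_pderiv_eq_sum_VC[OF C2])

lemma sum_dev_eq_0: "(\<Sum>j\<in>VC f k. dev j k t) = 0"
  using VC_nonempty by (simp add: dev_def sum_subtractf)

lemma consensus_error_nonneg: "0 \<le> consensus_error t"
  unfolding consensus_error_def by (intro sum_nonneg) auto

lemma lyap_has_derivative:
  assumes "0 \<le> t"
  shows "(lyap xs has_real_derivative lyap_deriv xs t) (at t within {0..})"
proof -
  have "((\<lambda>t. (x t $ j - xs $ j)\<^sup>2) has_real_derivative
      2 * (x t $ j - xs $ j) * (- (\<delta> * dbar j) * est j j t)) (at t within {0..})" for j
    using x_nth_has_derivative[OF assms, of j] by (auto intro!: derivative_eq_intros simp: algebra_simps)
  moreover have "((\<lambda>t. (dev j k t)\<^sup>2) has_real_derivative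
      2 * dev j k t * (est_deriv j k t - (\<Sum>l\<in>VC f k. est_deriv l k t) / card (VC f k))) (at t within {0..})"
    if "j \<in> VC f k" for j k
  proof -
    have "(dev j k has_real_derivative est_deriv j k t - (\<Sum>l\<in>VC f k. est_deriv l k t) / card (VC f k))
        (at t within {0..})"
      unfolding dev_def[abs_def] using that assms
      by (intro DERIV_diff DERIV_cdivide DERIV_sum est_has_derivative) auto
    then show ?thesis by (auto intro!: derivative_eq_intros simp: algebra_simps)
  qed
  ultimately show ?thesis
    unfolding lyap_def[abs_def] lyap_deriv_def weighted_sq_def consensus_error_def
    by (intro DERIV_add DERIV_sum DERIV_cmult) auto
qed

lemma abs_dev_le: "j \<in> VC f k \<Longrightarrow> \<bar>dev j k t\<bar> \<le> sqrt (consensus_error t)"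
proof -
  assume "j \<in> VC f k"
  then have "(dev j k t)\<^sup>2 \<le> (\<Sum>j\<in>VC f k. (dev j k t)\<^sup>2)" by (intro member_le_sum) auto
  also have "\<dots> \<le> consensus_error t"
    unfolding consensus_error_def by (intro member_le_sum) (auto intro: sum_nonneg)
  finally show ?thesis by (simp add: real_le_rsqrt)
qed

lemma abs_est_diag_le:
  assumes "0 \<le> t" and "\<bar>social_pderiv f i (x t)\<bar> \<le> G"
  shows "\<bar>est i i t\<bar> \<le> G + sqrt (consensus_error t)"
proof -
  have "1 \<le> real (card (VC f i))" using VC_nonempty by (simp add: Suc_le_eq card_gt_0_iff)
  then have "\<bar>social_pderiv f i (x t)\<bar> / card (VC f i) \<le> \<bar>social_pderiv f i (x t)\<bar> / 1"
    by (intro divide_left_mono) auto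
  then have "\<bar>social_pderiv f i (x t) / card (VC f i)\<bar> \<le> G"
    using assms(2) by (simp add: abs_divide)
  moreover have "est i i t = dev i i t + social_pderiv f i (x t) / card (VC f i)"
    using sum_est_eq[OF assms(1)] by (simp add: dev_def)
  ultimately show ?thesis using abs_dev_le[OF self_in_VC[of i f], of t] by linarith
qed

lemma abs_drift_le:
  fixes Dm G H :: real
  assumes "0 \<le> t" "0 < \<delta>" and Dm: "\<And>i. dbar i \<le> Dm"
    and G: "\<And>i. \<bar>social_pderiv f i (x t)\<bar> \<le> G"
    and H: "\<And>i. \<bar>pderiv_k (pderiv_k (f j) k) i (x t)\<bar> \<le> H" "0 \<le> H" "0 \<le> G"
  shows "\<bar>drift j k t\<bar> \<le> CARD('n) * \<delta> * Dm * H * (G + sqrt (consensus_error t))"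
proof -
  have "0 \<le> Dm" using dbar_pos[of j] Dm[of j] by linarith
  have "\<bar>(- (\<delta> * dbar i) * est i i t) * pderiv_k (pderiv_k (f j) k) i (x t)\<bar>
      \<le> \<delta> * Dm * H * (G + sqrt (consensus_error t))" for i
  proof -
    have "\<bar>- (\<delta> * dbar i)\<bar> \<le> \<delta> * Dm" using assms(2) dbar_pos[of i] Dm[of i] by (simp add: abs_mult)
    then have "\<bar>- (\<delta> * dbar i)\<bar> * \<bar>est i i t\<bar> * \<bar>pderiv_k (pderiv_k (f j) k) i (x t)\<bar>
        \<le> (\<delta> * Dm) * (G + sqrt (consensus_error t)) * H"
      using abs_est_diag_le[OF assms(1) G] H \<open>0 \<le> Dm\<close> assms(2) consensus_error_nonneg
      by (intro mult_mono mult_nonneg_nonneg add_nonneg_nonneg) auto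
    then show ?thesis by (simp add: abs_mult mult_ac)
  qed
  moreover have "0 \<le> \<delta> * Dm * H * (G + sqrt (consensus_error t))"
    using assms \<open>0 \<le> Dm\<close> consensus_error_nonneg by (intro mult_nonneg_nonneg add_nonneg_nonneg) auto
  ultimately have "(\<Sum>i\<in>UNIV. \<bar>(- (\<delta> * dbar i) * est i i t) * pderiv_k (pderiv_k (f j) k) i (x t)\<bar>)
      \<le> CARD('n) * (\<delta> * Dm * H * (G + sqrt (consensus_error t)))"
    by (intro sum_le_card_type_mult)
  then show ?thesis
    unfolding drift_def by (simp only: mult.assoc) (rule order_trans[OF sum_abs])
qed

lemma lyap_deriv_eq:
  assumes "0 \<le> t"
  shows "lyap_deriv xs t =
      - 2 * \<delta> * (\<Sum>j\<in>UNIV. (x t $ j - xs $ j) * social_pderiv f j (x t))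
      - 2 * \<delta> * (\<Sum>j\<in>UNIV. card (VC f j) * (x t $ j - xs $ j) * dev j j t)
      - (\<Sum>k\<in>UNIV. \<Sum>j\<in>VC f k. \<Sum>l\<in>VC f k. a j l * (dev j k t - dev l k t)\<^sup>2)
      + 2 * (\<Sum>k\<in>UNIV. \<Sum>j\<in>VC f k. dev j k t * drift j k t)"
proof -
  have "(card (VC f j) / dbar j) * (2 * (x t $ j - xs $ j) * (- (\<delta> * dbar j) * est j j t))
      = - 2 * \<delta> * ((x t $ j - xs $ j) * social_pderiv f j (x t))
        - 2 * \<delta> * (card (VC f j) * (x t $ j - xs $ j) * dev j j t)" for j
  proof -
    have "card (VC f j) * est j j t = social_pderiv f j (x t) + card (VC f j) * dev j j t"
      using sum_est_eq[OF assms] VC_nonempty[of f j] by (simp add: dev_def algebra_simps)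
    moreover have "dbar j \<noteq> 0" using dbar_pos[of j] by simp
    ultimately show ?thesis by (simp add: field_simps)
  qed
  moreover have "(\<Sum>j\<in>VC f k. 2 * dev j k t * (est_deriv j k t - (\<Sum>l\<in>VC f k. est_deriv l k t) / card (VC f k)))
      = - (\<Sum>j\<in>VC f k. \<Sum>l\<in>VC f k. a j l * (dev j k t - dev l k t)\<^sup>2) + 2 * (\<Sum>j\<in>VC f k. dev j k t * drift j k t)" for k
  proof -
    have "est_deriv j k t = - (\<Sum>l\<in>VC f k. a j l * (dev j k t - dev l k t)) + drift j k t" for j
      by (simp add: est_deriv_def dev_def)
    then show ?thesis
      using sum_deviation_laplacian_flow[OF a_sym sum_dev_eq_0[of k t], where h = "\<lambda>j. drift j k t"] by simp
  qed
  ultimately show ?thesis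
    unfolding lyap_deriv_def by (simp add: sum_subtractf sum_distrib_left sum.distrib sum_negf)
qed

lemma coupling_term_le:
  fixes \<rho> :: real
  assumes "0 \<le> \<delta>" and e: "\<And>j. \<bar>x t $ j - xs $ j\<bar> \<le> \<rho>"
  shows "- 2 * \<delta> * (\<Sum>j\<in>UNIV. card (VC f j) * (x t $ j - xs $ j) * dev j j t)
    \<le> \<delta> * (2 * (real CARD('n))\<^sup>2 * \<rho> * sqrt (consensus_error t))"
proof -
  have "0 \<le> \<rho>" using e[of undefined] by linarith
  have "- (card (VC f j) * (x t $ j - xs $ j) * dev j j t) \<le> real CARD('n) * \<rho> * sqrt (consensus_error t)" for j
  proof -
    have "card (VC f j) \<le> CARD('n)" by (rule card_mono) auto
    then have "\<bar>card (VC f j) * (x t $ j - xs $ j) * dev j j t\<bar> \<le> real CARD('n) * \<rho> * sqrt (consensus_error t)"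
      unfolding abs_mult using e abs_dev_le[OF self_in_VC] \<open>0 \<le> \<rho>\<close> by (intro mult_mono) auto
    then show ?thesis by linarith
  qed
  then have "(\<Sum>j\<in>UNIV. - (card (VC f j) * (x t $ j - xs $ j) * dev j j t))
      \<le> real CARD('n) * (real CARD('n) * \<rho> * sqrt (consensus_error t))"
    using \<open>0 \<le> \<rho>\<close> consensus_error_nonneg[of t] by (intro sum_le_card_type_mult) auto
  then have "- (\<Sum>j\<in>UNIV. card (VC f j) * (x t $ j - xs $ j) * dev j j t)
      \<le> (real CARD('n))\<^sup>2 * \<rho> * sqrt (consensus_error t)"
    by (simp add: sum_negf power2_eq_square mult.assoc)
  then have "2 * \<delta> * - (\<Sum>j\<in>UNIV. card (VC f j) * (x t $ j - xs $ j) * dev j j t)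
      \<le> 2 * \<delta> * ((real CARD('n))\<^sup>2 * \<rho> * sqrt (consensus_error t))"
    using \<open>0 \<le> \<delta>\<close> by (intro mult_left_mono) auto
  moreover have "- 2 * \<delta> * S \<le> \<delta> * (2 * n * \<rho> * r)" if "2 * \<delta> * - S \<le> 2 * \<delta> * (n * \<rho> * r)"
    for S n r :: real
    using that by (simp add: algebra_simps)
  ultimately show ?thesis by blast
qed

lemma drift_term_le:
  fixes Dm G H \<rho> :: real
  assumes "0 \<le> t" "0 < \<delta>" and Dm: "\<And>i. dbar i \<le> Dm"
    and G: "\<And>i. \<bar>social_pderiv f i (x t)\<bar> \<le> G"
    and H: "\<And>j k i. \<bar>pderiv_k (pderiv_k (f j) k) i (x t)\<bar> \<le> H" "0 \<le> H" "0 \<le> G"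
    and E: "sqrt (consensus_error t) \<le> \<rho>"
  shows "2 * (\<Sum>k\<in>UNIV. \<Sum>j\<in>VC f k. dev j k t * drift j k t)
    \<le> \<delta> * (2 * (real CARD('n))^3 * Dm * H * (G + \<rho>) * sqrt (consensus_error t))"
proof -
  define M where "M = real CARD('n) * \<delta> * Dm * H * (G + \<rho>)"
  have "0 \<le> Dm" using dbar_pos[of undefined] Dm[of undefined] by linarith
  have drift_le: "\<bar>drift j k t\<bar> \<le> M" for j k
  proof -
    have "real CARD('n) * \<delta> * Dm * H * (G + sqrt (consensus_error t)) \<le> M"
      unfolding M_def using E assms(2) \<open>0 \<le> Dm\<close> H by (intro mult_left_mono) auto
    then show ?thesis using abs_drift_le[OF assms(1,2) Dm G H(1)] H by (meson order_trans)
  qed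
  then have "dev j k t * drift j k t \<le> sqrt (consensus_error t) * M" if "j \<in> VC f k" for j k
  proof -
    have "dev j k t * drift j k t \<le> \<bar>dev j k t\<bar> * \<bar>drift j k t\<bar>" by (simp flip: abs_mult)
    also have "\<dots> \<le> sqrt (consensus_error t) * M"
      using abs_dev_le[OF that] drift_le consensus_error_nonneg[of t] by (intro mult_mono) auto
    finally show ?thesis .
  qed
  then have "(\<Sum>j\<in>VC f k. dev j k t * drift j k t) \<le> real CARD('n) * (sqrt (consensus_error t) * M)" for k
    using drift_le[of k k] consensus_error_nonneg[of t] by (intro sum_le_card_type_mult mult_nonneg_nonneg) auto
  then have "(\<Sum>k\<in>UNIV. \<Sum>j\<in>VC f k. dev j k t * drift j k t) \<le> real CARD('n) * (real CARD('n) * (sqrt (consensus_error t) * M))"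
    by (rule sum_le_card_type_mult)
       (use drift_le[of undefined undefined] consensus_error_nonneg[of t] in \<open>auto intro!: mult_nonneg_nonneg\<close>)
  then show ?thesis by (simp add: M_def power2_eq_square power3_eq_cube algebra_simps)
qed

lemma lyap_deriv_le:
  fixes lm Dm G H \<rho> K :: real
  assumes gap: "\<And>\<epsilon>. (\<And>k. (\<Sum>j\<in>VC f k. \<epsilon> j k) = 0) \<Longrightarrow>
      lm * (\<Sum>k\<in>UNIV. \<Sum>j\<in>VC f k. (\<epsilon> j k)\<^sup>2) \<le> (\<Sum>k\<in>UNIV. \<Sum>j\<in>VC f k. \<Sum>l\<in>VC f k. a j l * (\<epsilon> j k - \<epsilon> l k)\<^sup>2)"
    and "0 < lm" "0 < \<delta>" "\<delta> \<le> 1" "0 \<le> t" and Dm: "\<And>i. dbar i \<le> Dm"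
    and G: "\<And>i. \<bar>social_pderiv f i (x t)\<bar> \<le> G"
    and H: "\<And>j k i. \<bar>pderiv_k (pderiv_k (f j) k) i (x t)\<bar> \<le> H" "0 \<le> H" "0 \<le> G"
    and e: "\<And>j. \<bar>x t $ j - xs $ j\<bar> \<le> \<rho>" and E: "consensus_error t \<le> \<rho>\<^sup>2"
    and K: "K = 2 * (real CARD('n))\<^sup>2 * \<rho> + 2 * (real CARD('n))^3 * Dm * H * (G + \<rho>)"
  shows "lyap_deriv xs t \<le> - \<delta> * potential f lm xs (x t - xs, consensus_error t) + \<delta>\<^sup>2 * (K\<^sup>2 / (2 * lm))"
proof -
  define P where "P = (\<Sum>j\<in>UNIV. (x t $ j - xs $ j) * social_pderiv f j (x t))"
  have "0 \<le> \<rho>" using e[of undefined] by linarith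
  then have "sqrt (consensus_error t) \<le> \<rho>" using real_sqrt_le_mono[OF E] by simp
  have "lm * consensus_error t \<le> (\<Sum>k\<in>UNIV. \<Sum>j\<in>VC f k. \<Sum>l\<in>VC f k. a j l * (dev j k t - dev l k t)\<^sup>2)"
    unfolding consensus_error_def by (rule gap) (rule sum_dev_eq_0)
  moreover have "\<delta> * K * sqrt (consensus_error t)
      = \<delta> * (2 * (real CARD('n))\<^sup>2 * \<rho> * sqrt (consensus_error t))
        + \<delta> * (2 * (real CARD('n))^3 * Dm * H * (G + \<rho>) * sqrt (consensus_error t))"
    unfolding K by (simp add: algebra_simps)
  ultimately have "lyap_deriv xs t \<le> - 2 * \<delta> * P - lm * consensus_error t + \<delta> * K * sqrt (consensus_error t)"
    using lyap_deriv_eq[OF \<open>0 \<le> t\<close>, of xs] coupling_term_le[OF less_imp_le[OF \<open>0 < \<delta>\<close>] e]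
      drift_term_le[OF \<open>0 \<le> t\<close> \<open>0 < \<delta>\<close> Dm G H \<open>sqrt (consensus_error t) \<le> \<rho>\<close>]
    unfolding P_def by linarith
  also have "\<dots> \<le> - 2 * \<delta> * P - lm / 2 * consensus_error t + \<delta>\<^sup>2 * (K\<^sup>2 / (2 * lm))"
    using absorb_sqrt_term[OF \<open>0 < lm\<close> consensus_error_nonneg[of t], where K = K and \<delta> = \<delta>] by linarith
  also have "\<dots> \<le> - \<delta> * (2 * P + lm / 2 * consensus_error t) + \<delta>\<^sup>2 * (K\<^sup>2 / (2 * lm))"
    using \<open>\<delta> \<le> 1\<close> \<open>0 < lm\<close> consensus_error_nonneg[of t]
      mult_right_mono[of \<delta> 1 "lm / 2 * consensus_error t"] by (simp add: algebra_simps)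
  finally show ?thesis by (simp add: potential_def P_def)
qed

end

section \<open>Forward invariance and settling of the Lyapunov function\<close>

lemma weighted_sq_nonneg: "(\<And>j. 0 < dbar j) \<Longrightarrow> 0 \<le> weighted_sq f dbar e"
  unfolding weighted_sq_def by (intro sum_nonneg mult_nonneg_nonneg divide_nonneg_pos) auto

lemma norm_sq_le_weighted_sq:
  fixes e :: "real^'n::finite"
  assumes "0 < clo" "\<And>j. clo \<le> card (VC f j) / dbar j"
  shows "clo * (norm e)\<^sup>2 \<le> weighted_sq f dbar e"
proof -
  have "clo * (norm e)\<^sup>2 = (\<Sum>j\<in>UNIV. clo * (e $ j)\<^sup>2)"
    by (simp add: norm_sq_eq_sum_vec sum_distrib_left)
  also have "\<dots> \<le> weighted_sq f dbar e"
    unfolding weighted_sq_def using assms by (intro sum_mono mult_right_mono) auto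
  finally show ?thesis .
qed

lemma weighted_sq_le_norm_sq:
  fixes e :: "real^'n::finite"
  assumes "\<And>j. card (VC f j) / dbar j \<le> ch"
  shows "weighted_sq f dbar e \<le> ch * (norm e)\<^sup>2"
proof -
  have "weighted_sq f dbar e \<le> (\<Sum>j\<in>UNIV. ch * (e $ j)\<^sup>2)"
    unfolding weighted_sq_def using assms by (intro sum_mono mult_right_mono) auto
  also have "\<dots> = ch * (norm e)\<^sup>2"
    by (simp add: norm_sq_eq_sum_vec sum_distrib_left)
  finally show ?thesis .
qed

text \<open>Constants for a fixed trajectory: \<open>Bd\<close> bounds the Lyapunov function, \<open>G\<close>, \<open>H\<close> bound the first and
  second derivatives on the corresponding ball, \<open>mstar\<close> bounds the potential from below where the
  Lyapunov function is at least \<open>\<mu>0\<close>, and \<open>\<delta>\<close> is small enough for the \<open>O(\<delta>\<^sup>2)\<close> error.\<close>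
locale consensus_gradient_bounds = consensus_gradient_dynamics f a dbar \<delta> x w
    for f :: "'n::finite \<Rightarrow> real^'n \<Rightarrow> real" and a dbar \<delta> x w +
  fixes xs :: "real^'n" and lm Dm clo Bd G H K \<mu>0 mstar B0 :: real
  assumes gap: "\<And>\<epsilon>. (\<And>k. (\<Sum>j\<in>VC f k. \<epsilon> j k) = 0) \<Longrightarrow>
      lm * (\<Sum>k\<in>UNIV. \<Sum>j\<in>VC f k. (\<epsilon> j k)\<^sup>2) \<le> (\<Sum>k\<in>UNIV. \<Sum>j\<in>VC f k. \<Sum>l\<in>VC f k. a j l * (\<epsilon> j k - \<epsilon> l k)\<^sup>2)"
    and lm_pos: "0 < lm" and \<delta>_pos: "0 < \<delta>" and \<delta>_le_1: "\<delta> \<le> 1"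
    and Dm: "\<And>j. dbar j \<le> Dm"
    and clo: "0 < clo" "clo \<le> 1" "\<And>j. clo \<le> real (card (VC f j)) / dbar j"
    and G: "\<And>j y. y \<in> cball xs (sqrt (Bd / clo)) \<Longrightarrow> \<bar>social_pderiv f j y\<bar> \<le> G" "0 \<le> G"
    and H: "\<And>j k i y. y \<in> cball xs (sqrt (Bd / clo)) \<Longrightarrow> \<bar>pderiv_k (pderiv_k (f j) k) i y\<bar> \<le> H" "0 \<le> H"
    and K: "K = 2 * (real CARD('n))\<^sup>2 * sqrt (Bd / clo) + 2 * (real CARD('n))^3 * Dm * H * (G + sqrt (Bd / clo))"
    and \<mu>0: "0 < \<mu>0" "\<mu>0 \<le> 1"
    and mstar: "0 < mstar" "\<And>p. p \<in> level_region f dbar (sqrt (Bd / clo)) \<mu>0 \<Longrightarrow> mstar \<le> potential f lm xs p"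
    and \<delta>_small: "\<delta> * (K\<^sup>2 / (2 * lm)) \<le> mstar / 2"
    and B0: "0 \<le> B0" "lyap xs 0 \<le> B0" "B0 + 2 \<le> Bd"
begin

lemma mem_level_region:
  assumes "lyap xs t \<le> M" "\<mu> \<le> lyap xs t" "M / clo \<le> \<rho>\<^sup>2" "0 \<le> \<rho>"
  shows "(x t - xs, consensus_error t) \<in> level_region f dbar \<rho> \<mu>"
proof -
  have "clo * (norm (x t - xs))\<^sup>2 \<le> M"
    using norm_sq_le_weighted_sq[OF clo(1,3), of "x t - xs"] consensus_error_nonneg[of t] assms(1) lyap_def[of xs t] by linarith
  also have "M \<le> clo * \<rho>\<^sup>2" using clo(1) assms(3) by (simp add: divide_le_eq mult.commute)
  finally have "(norm (x t - xs))\<^sup>2 \<le> \<rho>\<^sup>2" using clo(1) by simp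
  then have "norm (x t - xs) \<le> \<rho>" using assms(4) by (meson norm_ge_zero power2_le_imp_le)
  moreover have "consensus_error t \<le> M"
    using weighted_sq_nonneg[where dbar = dbar, OF dbar_pos, of f "x t - xs"] assms(1) lyap_def[of xs t] by (smt (verit))
  moreover have "M \<le> M / clo"
    using clo \<open>consensus_error t \<le> M\<close> consensus_error_nonneg[of t]
    by (simp add: le_divide_eq mult_left_le)
  ultimately show ?thesis
    using assms consensus_error_nonneg[of t] lyap_def[of xs t] by (auto simp: level_region_def)
qed

lemma lyap_deriv_le_potential:
  assumes "0 \<le> t" "lyap xs t \<le> Bd"
  shows "lyap_deriv xs t \<le> - \<delta> * potential f lm xs (x t - xs, consensus_error t) + \<delta>\<^sup>2 * (K\<^sup>2 / (2 * lm))"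
proof -
  define \<rho> where "\<rho> = sqrt (Bd / clo)"
  have "0 \<le> Bd" using B0 by linarith
  then have "0 \<le> \<rho>" "Bd / clo \<le> \<rho>\<^sup>2" using clo by (auto simp: \<rho>_def)
  then have "(x t - xs, consensus_error t) \<in> level_region f dbar \<rho> 0"
    using assms(2) lyap_def[of xs t] weighted_sq_nonneg[where dbar = dbar, OF dbar_pos, of f "x t - xs"] consensus_error_nonneg[of t]
    by (intro mem_level_region) auto
  then have "norm (x t - xs) \<le> \<rho>" "consensus_error t \<le> \<rho>\<^sup>2"
    by (auto simp: level_region_def)
  then have "x t \<in> cball xs \<rho>" "\<And>j. \<bar>x t $ j - xs $ j\<bar> \<le> \<rho>"
    using component_le_norm_cart[of "x t - xs"] by (auto simp: dist_norm norm_minus_commute intro: order_trans)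
  then show ?thesis
    using \<open>consensus_error t \<le> \<rho>\<^sup>2\<close> G H K unfolding \<rho>_def
    by (intro lyap_deriv_le[OF gap lm_pos \<delta>_pos \<delta>_le_1 assms(1) Dm]) auto
qed

lemma lyap_has_derivative_on_atLeast:
  "\<forall>t\<ge>0. (lyap xs has_real_derivative lyap_deriv xs t) (at t within {0..})"
  using lyap_has_derivative by blast

lemma second_order_error_le:
  assumes "mstar \<le> m"
  shows "\<delta>\<^sup>2 * (K\<^sup>2 / (2 * lm)) \<le> \<delta> * m / 2"
proof -
  have "\<delta> * (\<delta> * (K\<^sup>2 / (2 * lm))) \<le> \<delta> * (mstar / 2)"
    using \<delta>_small \<delta>_pos by (intro mult_left_mono) auto
  also have "\<dots> \<le> \<delta> * (m / 2)" using assms \<delta>_pos by (intro mult_left_mono) auto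
  finally show ?thesis by (simp add: power2_eq_square mult.assoc)
qed

lemma potential_ge_mstar:
  assumes "\<rho> \<le> sqrt (Bd / clo)" "0 \<le> \<rho>" "\<mu>0 \<le> \<mu>" "p \<in> level_region f dbar \<rho> \<mu>"
  shows "mstar \<le> potential f lm xs p"
proof -
  have "level_region f dbar \<rho> \<mu> \<subseteq> level_region f dbar (sqrt (Bd / clo)) \<mu>0"
    using assms by (intro level_region_mono) auto
  then show ?thesis using mstar(2) assms(4) by blast
qed

lemma lyap_deriv_nonpos:
  assumes "0 \<le> t" "\<mu>0 \<le> lyap xs t" "lyap xs t \<le> Bd"
  shows "lyap_deriv xs t \<le> 0"
proof -
  have "0 \<le> Bd" using B0 by linarith
  then have "(x t - xs, consensus_error t) \<in> level_region f dbar (sqrt (Bd / clo)) \<mu>0"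
    using assms clo(1) by (intro mem_level_region) auto
  then have "\<delta> * mstar \<le> \<delta> * potential f lm xs (x t - xs, consensus_error t)"
    using mstar(2) \<delta>_pos by (intro mult_left_mono) auto
  moreover have "0 < \<delta> * mstar" using \<delta>_pos mstar(1) by simp
  ultimately show ?thesis
    using lyap_deriv_le_potential[OF assms(1,3)] second_order_error_le[of mstar] by linarith
qed

lemma lyap_le_max: "0 \<le> t \<Longrightarrow> lyap xs t \<le> max B0 \<mu>0"
  using B0 \<mu>0 lyap_deriv_nonpos
  by (intro sublevel_forward_invariant[OF lyap_has_derivative_on_atLeast, where B = Bd and s = 0 and t = t]) auto

lemma lyap_in_level_region:
  assumes "0 \<le> s" "\<mu> \<le> lyap xs s" "0 \<le> \<rho>" "(B0 + 2) / clo \<le> \<rho>\<^sup>2"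
  shows "(x s - xs, consensus_error s) \<in> level_region f dbar \<rho> \<mu>"
proof (rule mem_level_region[where M = "B0 + 1"])
  show "lyap xs s \<le> B0 + 1" using lyap_le_max[OF assms(1)] \<mu>0 B0 by linarith
  show "(B0 + 1) / clo \<le> \<rho>\<^sup>2" using assms(4) clo(1) by (smt (verit) divide_right_mono)
qed (use assms in auto)

text \<open>While the Lyapunov function stays above \<open>\<mu>\<close> it decreases at rate at least \<open>\<delta> m / 2\<close>, \<open>m\<close> the
  infimum of the potential over the region it lives in; so it drops below \<open>\<mu>\<close> in time \<open>2 (B0 + 2) / (\<delta> m)\<close>.\<close>
lemma lyap_reaches_level:
  assumes "\<mu>0 \<le> \<mu>" "0 \<le> t" "0 \<le> \<rho>" "(B0 + 2) / clo \<le> \<rho>\<^sup>2" "\<rho> \<le> sqrt (Bd / clo)"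
    and ne: "level_region f dbar \<rho> \<mu> \<noteq> {}"
    and settled: "2 * (B0 + 2) / Inf (potential f lm xs ` level_region f dbar \<rho> \<mu>) \<le> \<delta> * t"
  shows "\<exists>t0. 0 \<le> t0 \<and> t0 \<le> t \<and> lyap xs t0 \<le> \<mu>"
proof (rule ccontr)
  assume "\<nexists>t0. 0 \<le> t0 \<and> t0 \<le> t \<and> lyap xs t0 \<le> \<mu>"
  then have above: "\<mu> < lyap xs s" if "0 \<le> s" "s \<le> t" for s using that by force
  define m where "m = Inf (potential f lm xs ` level_region f dbar \<rho> \<mu>)"
  have low: "mstar \<le> potential f lm xs p" if "p \<in> level_region f dbar \<rho> \<mu>" for p
    using potential_ge_mstar assms that by blast
  then have "mstar \<le> m" unfolding m_def using ne by (intro cInf_greatest) auto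
  have "m \<le> potential f lm xs p" if "p \<in> level_region f dbar \<rho> \<mu>" for p
    unfolding m_def by (rule cInf_lower[OF imageI[OF that]]) (rule bdd_belowI2[where m = mstar], rule low)
  then have "lyap_deriv xs s \<le> - (\<delta> * m / 2)" if "0 \<le> s" "s \<le> t" for s
    using lyap_deriv_le_potential[of s] lyap_in_level_region[of s \<mu> \<rho>] above[OF that]
      lyap_le_max[of s] second_order_error_le[OF \<open>mstar \<le> m\<close>] mult_left_mono[of m _ \<delta>] \<delta>_pos B0 \<mu>0 assms that
    by fastforce
  then have "lyap xs t \<le> lyap xs 0 - \<delta> * m / 2 * (t - 0)"
    by (intro derivative_le_imp_linear_decrease[OF lyap_has_derivative_on_atLeast]) (use assms in auto)
  moreover have "2 * (B0 + 2) \<le> \<delta> * t * m"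
    using settled \<open>mstar \<le> m\<close> mstar(1) by (simp add: m_def divide_le_eq)
  ultimately show False using above[of t] assms B0 \<mu>0 by (simp add: algebra_simps)
qed

lemma lyap_le_level:
  assumes "\<mu>0 \<le> \<mu>" "0 \<le> t" "0 \<le> \<rho>" "(B0 + 2) / clo \<le> \<rho>\<^sup>2" "\<rho> \<le> sqrt (Bd / clo)"
    and settled: "level_region f dbar \<rho> \<mu> \<noteq> {} \<Longrightarrow>
      2 * (B0 + 2) / Inf (potential f lm xs ` level_region f dbar \<rho> \<mu>) \<le> \<delta> * t"
  shows "lyap xs t \<le> \<mu>"
proof (rule ccontr)
  assume "\<not> lyap xs t \<le> \<mu>"
  then have "level_region f dbar \<rho> \<mu> \<noteq> {}" using lyap_in_level_region[of t \<mu> \<rho>] assms by auto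
  then obtain t0 where "0 \<le> t0" "t0 \<le> t" "lyap xs t0 \<le> \<mu>"
    using lyap_reaches_level[OF assms(1-5)] settled by blast
  show False
  proof (cases "\<mu> < Bd")
    case True
    have "lyap xs t \<le> \<mu>"
      using \<open>lyap xs t0 \<le> \<mu>\<close> \<open>0 \<le> t0\<close> \<open>t0 \<le> t\<close> assms(1) lyap_deriv_nonpos
      by (intro sublevel_forward_invariant[OF lyap_has_derivative_on_atLeast, where B = Bd and s = t0 and t = t and m = \<mu>, OF _ _ True]) auto
    with \<open>\<not> lyap xs t \<le> \<mu>\<close> show False ..
  next
    case False
    then show False using lyap_le_max[OF assms(2)] \<open>\<not> lyap xs t \<le> \<mu>\<close> B0 \<mu>0 by linarith
  qed
qed

end

section \<open>Uniform practical stability\<close>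

lemma uniform_bound_on_compact:
  fixes h :: "'i::finite \<Rightarrow> 'a::metric_space \<Rightarrow> real"
  assumes "compact S" and "\<And>i. continuous_on S (h i)"
  obtains G where "0 \<le> G" and "\<And>i y. y \<in> S \<Longrightarrow> \<bar>h i y\<bar> \<le> G"
proof -
  have "\<exists>B. \<forall>y\<in>S. \<bar>h i y\<bar> \<le> B" for i
    using compact_imp_bounded[OF compact_continuous_image[OF assms(2) assms(1)]]
    by (auto simp: bounded_iff)
  then obtain B where B: "\<And>i y. y \<in> S \<Longrightarrow> \<bar>h i y\<bar> \<le> B i" by metis
  show ?thesis
  proof (rule that[of "\<Sum>i\<in>UNIV. \<bar>B i\<bar>"])
    show "0 \<le> (\<Sum>i\<in>UNIV. \<bar>B i\<bar>)" by (intro sum_nonneg) auto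
    fix i y assume "y \<in> S"
    then have "\<bar>h i y\<bar> \<le> \<bar>B i\<bar>" using B[of y i] by linarith
    also have "\<dots> \<le> (\<Sum>i\<in>UNIV. \<bar>B i\<bar>)" by (rule member_le_sum) auto
    finally show "\<bar>h i y\<bar> \<le> (\<Sum>i\<in>UNIV. \<bar>B i\<bar>)" .
  qed
qed

lemma positive_bounds_finite:
  fixes c :: "'n::finite \<Rightarrow> real"
  assumes "\<And>j. 0 < c j"
  obtains lo hi where "0 < lo" "lo \<le> 1" "1 \<le> hi" "\<And>j. lo \<le> c j" "\<And>j. c j \<le> hi"
proof (rule that[of "min 1 (Min (range c))" "max 1 (Max (range c))"])
  show "0 < min 1 (Min (range c))" using assms by simp
  show "min 1 (Min (range c)) \<le> c j" "c j \<le> max 1 (Max (range c))" for j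
    by (simp_all add: min.coboundedI2 max.coboundedI2)
qed simp_all

text \<open>A bound on the time \<open>\<delta> t\<close> after which the Lyapunov function of a trajectory with \<open>\<parallel>\<chi>\<^sub>1(0)\<parallel> = r\<close>
  has dropped to \<open>\<mu>\<close>: \<open>ch r\<^sup>2 + 2\<close> bounds it initially, and it decreases at rate at least half the
  infimum of the potential over the region where it can be while still above \<open>\<mu>\<close>.\<close>
definition settling_time :: "('n::finite \<Rightarrow> real^'n \<Rightarrow> real) \<Rightarrow> ('n \<Rightarrow> real) \<Rightarrow> real \<Rightarrow> real^'n
    \<Rightarrow> real \<Rightarrow> real \<Rightarrow> real \<Rightarrow> real \<Rightarrow> real" where
  "settling_time f dbar lm xs clo ch r \<mu> =
     (if level_region f dbar (sqrt ((ch * r\<^sup>2 + 2) / clo)) \<mu> = {} then 0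
      else 2 * (ch * r\<^sup>2 + 2) / Inf (potential f lm xs ` level_region f dbar (sqrt ((ch * r\<^sup>2 + 2) / clo)) \<mu>))"

lemma settling_time_mono:
  fixes f :: "'n::finite \<Rightarrow> real^'n \<Rightarrow> real"
  assumes C2: "\<And>j. C2_fun (f j)"
    and min: "\<And>y. (\<Sum>j\<in>UNIV. f j xs) \<le> (\<Sum>j\<in>UNIV. f j y)"
    and mono: "\<forall>x y. x \<noteq> y \<longrightarrow> 0 < (\<Sum>k\<in>UNIV. (x $ k - y $ k) * (social_pderiv f k x - social_pderiv f k y))"
    and "0 < lm" "0 < clo" "0 \<le> ch" and r: "0 \<le> r" "r \<le> r'" and \<mu>: "0 < \<mu>'" "\<mu>' \<le> \<mu>"
  shows "settling_time f dbar lm xs clo ch r \<mu> \<le> settling_time f dbar lm xs clo ch r' \<mu>'"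
proof -
  define \<rho> where "\<rho> r = sqrt ((ch * r\<^sup>2 + 2) / clo)" for r
  define K where "K r \<mu> = level_region f dbar (\<rho> r) \<mu>" for r \<mu>
  have "ch * r\<^sup>2 \<le> ch * r'\<^sup>2" using r \<open>0 \<le> ch\<close> by (intro mult_left_mono power_mono) auto
  then have "\<rho> r \<le> \<rho> r'" "0 \<le> \<rho> r"
    unfolding \<rho>_def using \<open>0 < clo\<close> \<open>0 \<le> ch\<close> by (auto intro!: real_sqrt_le_mono divide_right_mono)
  then have sub: "K r \<mu> \<subseteq> K r' \<mu>'" unfolding K_def using \<mu> by (intro level_region_mono) auto
  show ?thesis
  proof (cases "K r \<mu> = {}")
    case False
    then have "K r' \<mu>' \<noteq> {}" using sub by auto
    have inf_pos: "0 < Inf (potential f lm xs ` K r' \<mu>')"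
      unfolding K_def using potential_attains_positive_inf(1)[OF C2 min mono] \<open>0 < lm\<close> \<mu> \<open>K r' \<mu>' \<noteq> {}\<close>
      by (auto simp: K_def)
    have "bdd_below (potential f lm xs ` K r' \<mu>')"
      using potential_attains_positive_inf(2)[OF C2 min mono \<open>0 < lm\<close> \<mu>(1) \<open>K r' \<mu>' \<noteq> {}\<close>[unfolded K_def]]
      by (intro bdd_belowI2[where m = "Inf (potential f lm xs ` K r' \<mu>')"]) (auto simp: K_def)
    then have "Inf (potential f lm xs ` K r' \<mu>') \<le> Inf (potential f lm xs ` K r \<mu>)"
      using False sub by (intro cInf_superset_mono) auto
    then have "2 * (ch * r\<^sup>2 + 2) / Inf (potential f lm xs ` K r \<mu>) \<le> 2 * (ch * r'\<^sup>2 + 2) / Inf (potential f lm xs ` K r' \<mu>')"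
      using inf_pos \<open>ch * r\<^sup>2 \<le> ch * r'\<^sup>2\<close> \<open>0 \<le> ch\<close> by (intro frac_le) auto
    then show ?thesis using False \<open>K r' \<mu>' \<noteq> {}\<close> by (simp add: settling_time_def K_def \<rho>_def)
  next
    case True
    have "0 \<le> settling_time f dbar lm xs clo ch r' \<mu>'"
      using potential_attains_positive_inf(1)[OF C2 min mono \<open>0 < lm\<close> \<mu>(1)] \<open>0 \<le> ch\<close>
      by (auto simp: settling_time_def intro!: divide_nonneg_pos)
    then show ?thesis using True by (simp add: settling_time_def K_def \<rho>_def)
  qed
qed

lemma potential_lower_bound:
  fixes f :: "'n::finite \<Rightarrow> real^'n \<Rightarrow> real"
  assumes C2: "\<And>j. C2_fun (f j)"
    and min: "\<And>y. (\<Sum>j\<in>UNIV. f j xs) \<le> (\<Sum>j\<in>UNIV. f j y)"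
    and mono: "\<forall>x y. x \<noteq> y \<longrightarrow> 0 < (\<Sum>k\<in>UNIV. (x $ k - y $ k) * (social_pderiv f k x - social_pderiv f k y))"
    and "0 < lm" "0 < \<mu>"
  obtains m where "0 < m" and "\<And>p. p \<in> level_region f dbar \<rho> \<mu> \<Longrightarrow> m \<le> potential f lm xs p"
proof (cases "level_region f dbar \<rho> \<mu> = {}")
  case True
  then show ?thesis by (intro that[of 1]) auto
next
  case False
  then show ?thesis
    using potential_attains_positive_inf[OF C2 min mono assms(4,5) False] by (intro that) auto
qed

definition chi_state :: "('n::finite \<Rightarrow> real^'n \<Rightarrow> real) \<Rightarrow> ('n \<Rightarrow> nat \<Rightarrow> 'n \<Rightarrow> real)
    \<Rightarrow> (real \<Rightarrow> real^'n) \<Rightarrow> ('n \<Rightarrow> 'n \<Rightarrow> real \<Rightarrow> real) \<Rightarrow> real^'n \<Rightarrow> real \<Rightarrow> real" where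
  "chi_state f R x w xs t = chi_norm f R (\<lambda>j k. w j k t + pderiv_k (f j) k (x t)) (x t) xs"

lemma chi_state_nonneg: "0 \<le> chi_state f R x w xs t"
  unfolding chi_state_def chi_norm_def by (intro real_sqrt_ge_zero add_nonneg_nonneg sum_nonneg) auto

context consensus_gradient_dynamics
begin

lemma chi_state_sq_eq:
  "admissible_R f R \<Longrightarrow> (chi_state f R x w xs t)\<^sup>2 = consensus_error t + (norm (x t - xs))\<^sup>2"
  using chi_norm_sq_eq by (simp add: chi_state_def consensus_error_def dev_def est_def)

lemma lyap_le_chi_state_sq:
  assumes "admissible_R f R" "1 \<le> ch" "\<And>j. card (VC f j) / dbar j \<le> ch"
  shows "lyap xs t \<le> ch * (chi_state f R x w xs t)\<^sup>2"
  using weighted_sq_le_norm_sq[where f = f and dbar = dbar, OF assms(3), of "x t - xs"]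
    mult_right_mono[OF assms(2) consensus_error_nonneg, of t] chi_state_sq_eq[OF assms(1), of xs t]
  by (simp add: lyap_def algebra_simps)

end

context consensus_gradient_bounds
begin

lemma chi_state_sq_le_lyap:
  "admissible_R f R \<Longrightarrow> clo * (chi_state f R x w xs t)\<^sup>2 \<le> lyap xs t"
  using norm_sq_le_weighted_sq[OF clo(1,3), of "x t - xs"] clo(2) consensus_error_nonneg[of t]
    mult_right_mono[OF clo(2) consensus_error_nonneg, of t] chi_state_sq_eq[of R xs t]
  by (simp add: lyap_def algebra_simps)

lemma chi_state_le_sqrt:
  assumes "admissible_R f R" "lyap xs t \<le> M"
  shows "chi_state f R x w xs t \<le> sqrt (M / clo)"
proof -
  have "(chi_state f R x w xs t)\<^sup>2 \<le> M / clo"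
    using chi_state_sq_le_lyap[OF assms(1), of t] assms(2) clo(1) by (simp add: field_simps)
  then show ?thesis by (rule real_le_rsqrt)
qed

lemma chi_state_estimate:
  assumes R: "admissible_R f R" and "0 \<le> t" "0 \<le> r" "0 \<le> ch" and B0_eq: "B0 = ch * r\<^sup>2"
  shows "chi_state f R x w xs t \<le> sqrt (ch / clo) * r + sqrt (\<mu>0 / clo)"
    and "\<mu>0 \<le> \<mu> \<Longrightarrow> settling_time f dbar lm xs clo ch r \<mu> \<le> \<delta> * t \<Longrightarrow>
      chi_state f R x w xs t \<le> sqrt (\<mu> / clo)"
proof -
  have "chi_state f R x w xs t \<le> sqrt ((B0 + \<mu>0) / clo)"
    using lyap_le_max[OF \<open>0 \<le> t\<close>] B0(1) \<mu>0(1) by (intro chi_state_le_sqrt[OF R]) linarith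
  also have "\<dots> \<le> sqrt (B0 / clo) + sqrt (\<mu>0 / clo)"
    using B0(1) \<mu>0(1) clo(1) by (simp add: add_divide_distrib sqrt_add_le_add_sqrt)
  also have "sqrt (B0 / clo) = sqrt (ch / clo) * r"
    using \<open>0 \<le> r\<close> by (simp add: B0_eq real_sqrt_mult real_sqrt_divide)
  finally show "chi_state f R x w xs t \<le> sqrt (ch / clo) * r + sqrt (\<mu>0 / clo)" .
next
  assume "\<mu>0 \<le> \<mu>" and settled: "settling_time f dbar lm xs clo ch r \<mu> \<le> \<delta> * t"
  define \<rho> where "\<rho> = sqrt ((ch * r\<^sup>2 + 2) / clo)"
  have "0 \<le> (ch * r\<^sup>2 + 2) / clo" using \<open>0 \<le> ch\<close> clo(1) by simp
  then have "0 \<le> \<rho>" "(B0 + 2) / clo \<le> \<rho>\<^sup>2" by (simp_all add: \<rho>_def B0_eq)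
  moreover have "\<rho> \<le> sqrt (Bd / clo)"
    using B0(3) clo(1) unfolding \<rho>_def B0_eq by (intro real_sqrt_le_mono divide_right_mono) auto
  ultimately have "lyap xs t \<le> \<mu>"
    using settled \<open>\<mu>0 \<le> \<mu>\<close> \<open>0 \<le> t\<close>
    by (intro lyap_le_level) (auto simp: settling_time_def \<rho>_def B0_eq split: if_splits)
  then show "chi_state f R x w xs t \<le> sqrt (\<mu> / clo)" by (rule chi_state_le_sqrt[OF R])
qed

lemma chi_state_practical_bound:
  assumes R: "admissible_R f R" and "0 \<le> t" "0 \<le> ch" "sqrt (\<mu>0 / clo) \<le> v"
    and r: "r = chi_state f R x w xs 0" "B0 = ch * r\<^sup>2"
    and T_antimono: "\<And>\<mu>. 0 < \<mu> \<Longrightarrow> \<mu> \<le> \<mu>0 \<Longrightarrow>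
      settling_time f dbar lm xs clo ch r \<mu>0 \<le> settling_time f dbar lm xs clo ch r \<mu>"
  shows "chi_state f R x w xs t \<le> sqrt (ch / clo) * r + v
    \<and> (\<forall>\<mu>>0. settling_time f dbar lm xs clo ch r \<mu> \<le> \<delta> * t \<longrightarrow> chi_state f R x w xs t - v \<le> sqrt (\<mu> / clo))"
proof (intro conjI allI impI)
  have "0 \<le> r" unfolding r by (rule chi_state_nonneg)
  note estimate = chi_state_estimate[OF R \<open>0 \<le> t\<close> \<open>0 \<le> r\<close> \<open>0 \<le> ch\<close> r(2)]
  show "chi_state f R x w xs t \<le> sqrt (ch / clo) * r + v" using estimate(1) assms(4) by linarith
  fix \<mu> :: real assume "0 < \<mu>" and settled: "settling_time f dbar lm xs clo ch r \<mu> \<le> \<delta> * t"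
  show "chi_state f R x w xs t - v \<le> sqrt (\<mu> / clo)"
  proof (cases "\<mu>0 \<le> \<mu>")
    case True
    then show ?thesis
      using estimate(2)[OF True settled] assms(4) \<mu>0(1) clo(1) by (smt (verit) real_sqrt_ge_zero divide_nonneg_pos)
  next
    case False
    then have "chi_state f R x w xs t \<le> v"
      using estimate(2)[of \<mu>0] T_antimono[OF \<open>0 < \<mu>\<close>] settled assms(4) by fastforce
    then show ?thesis using \<open>0 < \<mu>\<close> clo(1) by (smt (verit) real_sqrt_ge_zero divide_nonneg_pos)
  qed
qed

end

lemma derivative_bounds_on_compact:
  fixes f :: "'n::finite \<Rightarrow> real^'n \<Rightarrow> real"
  assumes C2: "\<And>j. C2_fun (f j)" and "compact S"
  obtains G H where "0 \<le> G" "\<And>j y. y \<in> S \<Longrightarrow> \<bar>social_pderiv f j y\<bar> \<le> G"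
    and "0 \<le> H" "\<And>j k i y. y \<in> S \<Longrightarrow> \<bar>pderiv_k (pderiv_k (f j) k) i y\<bar> \<le> H"
proof -
  obtain G where "0 \<le> G" "\<And>j y. y \<in> S \<Longrightarrow> \<bar>social_pderiv f j y\<bar> \<le> G"
    by (rule uniform_bound_on_compact[where h = "social_pderiv f", OF \<open>compact S\<close>
          continuous_on_social_pderiv[where f = f, OF C2]]) blast
  moreover define h :: "'n \<times> 'n \<times> 'n \<Rightarrow> real^'n \<Rightarrow> real" where "h = (\<lambda>(j, k, i). pderiv_k (pderiv_k (f j) k) i)"
  have "continuous_on S (h p)" for p
    using continuous_on_subset[OF C2_fun_continuous_pderiv_k2[OF C2]] by (auto simp: h_def split_beta)
  then obtain H where "0 \<le> H" and "\<And>p y. y \<in> S \<Longrightarrow> \<bar>h p y\<bar> \<le> H"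
    by (rule uniform_bound_on_compact[where h = h, OF \<open>compact S\<close>]) blast
  ultimately show ?thesis using that[of G H] by (force simp: h_def)
qed

lemma exists_small_parameter:
  fixes m e :: real
  assumes "0 < m" "0 \<le> e"
  obtains \<delta>s where "0 < \<delta>s" "\<delta>s \<le> 1" "\<And>\<delta>. 0 < \<delta> \<Longrightarrow> \<delta> < \<delta>s \<Longrightarrow> \<delta> * e \<le> m / 2"
proof (rule that[of "min 1 (m / (2 * e + 1))"])
  show "0 < min 1 (m / (2 * e + 1))" using assms by simp
  fix \<delta> assume "0 < \<delta>" "\<delta> < min 1 (m / (2 * e + 1))"
  then have "\<delta> * (2 * e + 1) < m" using assms(2) by (simp add: less_divide_eq)
  then show "\<delta> * e \<le> m / 2" using \<open>0 < \<delta>\<close> by (simp add: algebra_simps)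
qed simp

lemma exists_sqrt_divide_less:
  fixes c \<epsilon> :: real
  assumes "0 < c" "0 < \<epsilon>"
  shows "\<exists>\<mu>>0. sqrt (\<mu> / c) < \<epsilon>"
proof (intro exI conjI)
  show "0 < c * (\<epsilon> / 2)\<^sup>2" using assms by simp
  show "sqrt (c * (\<epsilon> / 2)\<^sup>2 / c) < \<epsilon>" using assms by simp
qed

lemma KL_construction_settling_time:
  fixes f :: "'n::finite \<Rightarrow> real^'n \<Rightarrow> real"
  assumes C2: "\<And>j. C2_fun (f j)"
    and min: "\<And>y. (\<Sum>j\<in>UNIV. f j xs) \<le> (\<Sum>j\<in>UNIV. f j y)"
    and mono: "\<forall>x y. x \<noteq> y \<longrightarrow> 0 < (\<Sum>k\<in>UNIV. (x $ k - y $ k) * (social_pderiv f k x - social_pderiv f k y))"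
    and "0 < lm" "0 < clo" "0 < ch"
  shows "KL_construction (sqrt (ch / clo)) (settling_time f dbar lm xs clo ch) (\<lambda>\<mu>. sqrt (\<mu> / clo))"
  using assms settling_time_mono[OF C2 min mono]
  by unfold_locales (auto intro: exists_sqrt_divide_less)

lemma uniform_practical_settling:
  fixes f :: "'n::finite \<Rightarrow> real^'n \<Rightarrow> real" and a :: "'n \<Rightarrow> 'n \<Rightarrow> real" and dbar :: "'n \<Rightarrow> real"
    and xs :: "real^'n" and R :: "'n \<Rightarrow> nat \<Rightarrow> 'n \<Rightarrow> real"
  assumes C2: "\<And>j. C2_fun (f j)"
    and min: "\<And>y. (\<Sum>j\<in>UNIV. f j xs) \<le> (\<Sum>j\<in>UNIV. f j y)"
    and mono: "\<forall>x y. x \<noteq> y \<longrightarrow> 0 < (\<Sum>k\<in>UNIV. (x $ k - y $ k) * (social_pderiv f k x - social_pderiv f k y))"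
    and gap: "\<forall>\<epsilon>. (\<forall>k. (\<Sum>j\<in>VC f k. \<epsilon> j k) = 0) \<longrightarrow>
      lm * (\<Sum>k\<in>UNIV. \<Sum>j\<in>VC f k. (\<epsilon> j k)\<^sup>2) \<le> (\<Sum>k\<in>UNIV. \<Sum>j\<in>VC f k. \<Sum>l\<in>VC f k. a j l * (\<epsilon> j k - \<epsilon> l k)\<^sup>2)"
    and "0 < lm" and clo: "0 < clo" "clo \<le> 1" "\<And>j. clo \<le> card (VC f j) / dbar j"
    and ch: "1 \<le> ch" "\<And>j. card (VC f j) / dbar j \<le> ch"
    and R: "admissible_R f R" and "0 < \<Delta>" "0 < v"
  shows "\<exists>\<delta>s>0. \<forall>\<delta> x w t. 0 < \<delta> \<longrightarrow> \<delta> < \<delta>s \<longrightarrow> consensus_gradient_dynamics f a dbar \<delta> x w \<longrightarrow>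
      chi_state f R x w xs 0 < \<Delta> \<longrightarrow> 0 \<le> t \<longrightarrow>
      chi_state f R x w xs t \<le> KL_construction.KL (sqrt (ch / clo)) (settling_time f dbar lm xs clo ch)
        (\<lambda>\<mu>. sqrt (\<mu> / clo)) (chi_state f R x w xs 0) (\<delta> * t) + v"
proof -
  define Bd where "Bd = ch * \<Delta>\<^sup>2 + 2"
  obtain G H where G: "0 \<le> G" "\<And>j y. y \<in> cball xs (sqrt (Bd / clo)) \<Longrightarrow> \<bar>social_pderiv f j y\<bar> \<le> G"
    and H: "0 \<le> H" "\<And>j k i y. y \<in> cball xs (sqrt (Bd / clo)) \<Longrightarrow> \<bar>pderiv_k (pderiv_k (f j) k) i y\<bar> \<le> H"
    by (rule derivative_bounds_on_compact[where f = f, OF C2 compact_cball]) blast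
  define K where "K = 2 * (real CARD('n))\<^sup>2 * sqrt (Bd / clo)
    + 2 * (real CARD('n))^3 * Max (range dbar) * H * (G + sqrt (Bd / clo))"
  define \<mu>0 where "\<mu>0 = min 1 (clo * v\<^sup>2)"
  have \<mu>0_bounds: "0 < \<mu>0" "\<mu>0 \<le> 1" "sqrt (\<mu>0 / clo) \<le> v"
    using clo(1) \<open>0 < v\<close> by (auto simp: \<mu>0_def real_le_lsqrt min_le_iff_disj field_simps)
  obtain mstar where mstar: "0 < mstar"
    "\<And>p. p \<in> level_region f dbar (sqrt (Bd / clo)) \<mu>0 \<Longrightarrow> mstar \<le> potential f lm xs p"
    using potential_lower_bound[OF C2 min mono \<open>0 < lm\<close> \<open>0 < \<mu>0\<close>] by blast
  obtain \<delta>s where "0 < \<delta>s" "\<delta>s \<le> 1" and small: "\<And>\<delta>. 0 < \<delta> \<Longrightarrow> \<delta> < \<delta>s \<Longrightarrow> \<delta> * (K\<^sup>2 / (2 * lm)) \<le> mstar / 2"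
    using exists_small_parameter[OF mstar(1), of "K\<^sup>2 / (2 * lm)"] \<open>0 < lm\<close> by auto
  show ?thesis
  proof (intro exI[of _ \<delta>s] conjI[OF \<open>0 < \<delta>s\<close>] allI impI)
    fix \<delta> t :: real and x :: "real \<Rightarrow> real^'n" and w :: "'n \<Rightarrow> 'n \<Rightarrow> real \<Rightarrow> real"
    assume \<delta>: "0 < \<delta>" "\<delta> < \<delta>s" and dyn: "consensus_gradient_dynamics f a dbar \<delta> x w"
      and r0: "chi_state f R x w xs 0 < \<Delta>" and "0 \<le> t"
    define r where "r = chi_state f R x w xs 0"
    have "ch * r\<^sup>2 + 2 \<le> Bd"
      using r0 chi_state_nonneg[of f R x w xs 0] ch(1) by (simp add: Bd_def r_def power_mono mult_left_mono)
    then interpret consensus_gradient_bounds f a dbar \<delta> x w xs lm "Max (range dbar)" clo Bd G H K \<mu>0 mstar "ch * r\<^sup>2"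
      using gap \<open>0 < lm\<close> \<delta> \<open>\<delta>s \<le> 1\<close> small[OF \<delta>] clo G H \<mu>0_bounds mstar ch(1)
        consensus_gradient_dynamics.lyap_le_chi_state_sq[OF dyn R ch]
      by (intro consensus_gradient_bounds.intro[OF dyn] consensus_gradient_bounds_axioms.intro)
         (auto simp: K_def r_def)
    have T_antimono: "settling_time f dbar lm xs clo ch r \<mu>0 \<le> settling_time f dbar lm xs clo ch r \<mu>"
      if "0 < \<mu>" "\<mu> \<le> \<mu>0" for \<mu>
      using that ch(1) chi_state_nonneg[of f R x w xs 0]
      by (intro settling_time_mono[OF C2 min mono \<open>0 < lm\<close> clo(1)]) (auto simp: r_def)
    have "0 \<le> r" "0 \<le> \<delta> * t" using chi_state_nonneg \<delta>(1) \<open>0 \<le> t\<close> by (simp_all add: r_def)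
    with chi_state_practical_bound[OF R \<open>0 \<le> t\<close> _ \<mu>0_bounds(3) r_def refl T_antimono] ch(1)
    show "chi_state f R x w xs t \<le> KL_construction.KL (sqrt (ch / clo)) (settling_time f dbar lm xs clo ch)
        (\<lambda>\<mu>. sqrt (\<mu> / clo)) (chi_state f R x w xs 0) (\<delta> * t) + v"
      unfolding r_def[symmetric]
      by (intro KL_construction.KL_bound[OF KL_construction_settling_time[OF C2 min mono \<open>0 < lm\<close> clo(1)]]) auto
  qed
qed

lemma practical_KL_bound_intro:
  fixes f :: "'n::finite \<Rightarrow> real^'n \<Rightarrow> real" and a :: "'n \<Rightarrow> 'n \<Rightarrow> real" and dbar :: "'n \<Rightarrow> real"
    and xs :: "real^'n" and R :: "'n \<Rightarrow> nat \<Rightarrow> 'n \<Rightarrow> real"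
  assumes C2: "\<forall>j. C2_fun (f j)" and a_sym: "\<forall>j l. a j l = a l j" and dbar_pos: "\<forall>j. dbar j > 0"
    and bound: "\<exists>\<delta>s>0. \<forall>\<delta> x w t. 0 < \<delta> \<longrightarrow> \<delta> < \<delta>s \<longrightarrow>
        consensus_gradient_dynamics f a dbar \<delta> x w \<longrightarrow> chi_state f R x w xs 0 < \<Delta> \<longrightarrow> 0 \<le> t \<longrightarrow>
        chi_state f R x w xs t \<le> \<phi> (chi_state f R x w xs 0) (\<delta> * t) + v"
  shows "\<exists>\<delta>s>0. \<forall>\<delta>. 0 < \<delta> \<and> \<delta> < \<delta>s \<longrightarrow>
         (\<forall>(x :: real \<Rightarrow> real^'n) (w :: 'n \<Rightarrow> 'n \<Rightarrow> real \<Rightarrow> real).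
            let g = (\<lambda>j k t. w j k t + pderiv_k (f j) k (x t)) in
            (\<forall>t\<ge>0. (x has_vector_derivative (\<chi> j. - (\<delta> * dbar j) * g j j t)) (at t within {0..}))
            \<and> (\<forall>j. \<forall>k\<in>VC f j. \<forall>t\<ge>0.
                 (w j k has_vector_derivative
                    (- (\<Sum>l\<in>VC f k. a j l * (g j k t - g l k t)))) (at t within {0..}))
            \<and> (\<forall>j. \<forall>k\<in>VC f j. w j k 0 = 0)
            \<and> chi_norm f R (\<lambda>j k. g j k 0) (x 0) xs < \<Delta>
            \<longrightarrow> (\<forall>t\<ge>0. chi_norm f R (\<lambda>j k. g j k t) (x t) xs
                         \<le> \<phi> (chi_norm f R (\<lambda>j k. g j k 0) (x 0) xs) (\<delta> * t) + v))"
proof -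
  obtain \<delta>s where "0 < \<delta>s" and bound: "\<And>\<delta> x w t. 0 < \<delta> \<Longrightarrow> \<delta> < \<delta>s \<Longrightarrow>
      consensus_gradient_dynamics f a dbar \<delta> x w \<Longrightarrow> chi_state f R x w xs 0 < \<Delta> \<Longrightarrow> 0 \<le> t \<Longrightarrow>
      chi_state f R x w xs t \<le> \<phi> (chi_state f R x w xs 0) (\<delta> * t) + v"
    using bound by blast
  have dynamics: "consensus_gradient_dynamics f a dbar \<delta> x w"
    if "\<forall>t\<ge>0. (x has_vector_derivative (\<chi> j. - (\<delta> * dbar j) * (w j j t + pderiv_k (f j) j (x t)))) (at t within {0..})"
      "\<forall>j. \<forall>k\<in>VC f j. \<forall>t\<ge>0. (w j k has_vector_derivative (- (\<Sum>l\<in>VC f k. a j l *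
          ((w j k t + pderiv_k (f j) k (x t)) - (w l k t + pderiv_k (f l) k (x t)))))) (at t within {0..})"
      "\<forall>j. \<forall>k\<in>VC f j. w j k 0 = 0" for \<delta> x w
    using that C2 a_sym dbar_pos by unfold_locales auto
  show ?thesis
    unfolding Let_def
    by (intro exI[of _ \<delta>s] conjI allI impI \<open>0 < \<delta>s\<close> bound[unfolded chi_state_def] dynamics)
       (simp_all add: chi_state_def)
qed

theorem corollary2:
  fixes f :: "'n::finite \<Rightarrow> real^'n \<Rightarrow> real"
    and a :: "'n \<Rightarrow> 'n \<Rightarrow> real"
    and dbar :: "'n \<Rightarrow> real"
    and xstar :: "real^'n"
    and R :: "'n \<Rightarrow> nat \<Rightarrow> 'n \<Rightarrow> real"
  assumes m2: "CARD('n) \<ge> 2"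
    and minimizer: "\<forall>y. (\<Sum>j\<in>UNIV. f j xstar) \<le> (\<Sum>j\<in>UNIV. f j y)"
    and C2: "\<forall>j. C2_fun (f j)"
    and strict_mono_grad: "\<forall>x y. x \<noteq> y \<longrightarrow>
          (\<Sum>k\<in>UNIV. (x $ k - y $ k) *
             (pderiv_k (\<lambda>z. \<Sum>j\<in>UNIV. f j z) k x - pderiv_k (\<lambda>z. \<Sum>j\<in>UNIV. f j z) k y)) > 0"
    and a_sym: "\<forall>j l. a j l = a l j"
    and a_nonneg: "\<forall>j l. a j l \<ge> 0"
    and a_diag: "\<forall>j. a j j = 0"
    and GI_conn: "interference_connected f"
    and GC_conn: "\<forall>k. induced_connected a (VC f k)"
    and dbar_pos: "\<forall>j. dbar j > 0"
    and R_adm: "admissible_R f R"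
  shows "\<exists>\<phi>. class_KL \<phi> \<and>
     (\<forall>\<Delta> v. \<Delta> > 0 \<and> v > 0 \<longrightarrow>
       (\<exists>\<delta>s>0. \<forall>\<delta>. 0 < \<delta> \<and> \<delta> < \<delta>s \<longrightarrow>
         (\<forall>(x :: real \<Rightarrow> real^'n) (w :: 'n \<Rightarrow> 'n \<Rightarrow> real \<Rightarrow> real).
            let g = (\<lambda>j k t. w j k t + pderiv_k (f j) k (x t)) in
            (\<forall>t\<ge>0. (x has_vector_derivative (\<chi> j. - (\<delta> * dbar j) * g j j t)) (at t within {0..}))
            \<and> (\<forall>j. \<forall>k\<in>VC f j. \<forall>t\<ge>0.
                 (w j k has_vector_derivative
                    (- (\<Sum>l\<in>VC f k. a j l * (g j k t - g l k t)))) (at t within {0..}))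
            \<and> (\<forall>j. \<forall>k\<in>VC f j. w j k 0 = 0)
            \<and> chi_norm f R (\<lambda>j k. g j k 0) (x 0) xstar < \<Delta>
            \<longrightarrow> (\<forall>t\<ge>0. chi_norm f R (\<lambda>j k. g j k t) (x t) xstar
                         \<le> \<phi> (chi_norm f R (\<lambda>j k. g j k 0) (x 0) xstar) (\<delta> * t) + v))))"
proof -
  have C2': "\<And>j. C2_fun (f j)" and min: "\<And>y. (\<Sum>j\<in>UNIV. f j xstar) \<le> (\<Sum>j\<in>UNIV. f j y)"
    using C2 minimizer by blast+
  have mono: "\<forall>x y. x \<noteq> y \<longrightarrow> 0 < (\<Sum>k\<in>UNIV. (x $ k - y $ k) * (social_pderiv f k x - social_pderiv f k y))"
    using strict_mono_grad by (simp add: social_pderiv_def)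
  obtain lm where "0 < lm" and gap: "\<forall>\<epsilon>. (\<forall>k. (\<Sum>j\<in>VC f k. \<epsilon> j k) = 0) \<longrightarrow>
      lm * (\<Sum>k\<in>UNIV. \<Sum>j\<in>VC f k. (\<epsilon> j k)\<^sup>2) \<le> (\<Sum>k\<in>UNIV. \<Sum>j\<in>VC f k. \<Sum>l\<in>VC f k. a j l * (\<epsilon> j k - \<epsilon> l k)\<^sup>2)"
    using laplacian_coercive_uniform[of a "VC f"] a_nonneg GC_conn by blast
  obtain clo ch where clo: "0 < clo" "clo \<le> 1" "\<And>j. clo \<le> card (VC f j) / dbar j"
    and ch: "1 \<le> ch" "\<And>j. card (VC f j) / dbar j \<le> ch"
    using positive_bounds_finite[of "\<lambda>j. card (VC f j) / dbar j"] dbar_pos VC_nonempty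
    by (metis card_gt_0_iff divide_pos_pos finite of_nat_0_less_iff)
  interpret KL: KL_construction "sqrt (ch / clo)" "settling_time f dbar lm xstar clo ch" "\<lambda>\<mu>. sqrt (\<mu> / clo)"
    using clo ch by (intro KL_construction_settling_time[OF C2' min mono \<open>0 < lm\<close>]) auto
  show ?thesis
    using uniform_practical_settling[OF C2' min mono gap \<open>0 < lm\<close> clo ch R_adm]
    by (intro exI[of _ KL.KL] conjI allI impI KL.class_KL_KL practical_KL_bound_intro[OF C2 a_sym dbar_pos])
       auto
qed

end
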